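(* Let $f\in\mathbb C[x,y]$ be a nonzero homogeneous polynomial of degree $d$. Then for every $\omega=(\omega_1,\omega_2)\in\mathbb R^2\setminus\{0\}$ the b-function $b_{\mathrm{Ann}(1/f),\omega}(s)$ divides $$\Big(\prod_{i=0}^d\big(s+i\omega_1+(d-i)\omega_2\big)\Big)_{\mathrm{red}}.$$
   Context: $D_2$ is the second Weyl algebra in $x,y,\partial_x,\partial_y$; ideals are left ideals. For $\omega\in\mathbb R^2$, the $(-\omega,\omega)$-weight of $x^{a}y^{b}\partial_x^{c}\partial_y^{e}$ is $-\omega_1a-\omega_2b+\omega_1c+\omega_2e$; $\mathrm{in}_{(-\omega,\omega)}(I)$ is the left ideal generated by the maximal-weight parts of the (normally ordered) elements of $I$. For a holonomic ideal $I$ and $\omega\neq0$, with $s=\omega_1x\partial_x+\omega_2y\partial_y$, the b-function $b_{I,\omega}(s)$ is the monic generator of $\mathrm{in}_{(-\omega,\omega)}(I)\cap\mathbb C[s]$. $\mathrm{Ann}(1/f)=\{P\in D_2:P\bullet f^{-1}=0\}$, with $x\bullet g=xg$, $\partial_x\bullet g=\partial g/\partial x$, etc. For a product $B(s)$ of linear factors, $B(s)_{\mathrm{red}}$ is the product of its distinct linear factors, each taken once. *)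

theory Defs
  imports "HOL-Analysis.Analysis" "HOL-Library.Poly_Mapping" "HOL-Computational_Algebra.Polynomial"
begin

text \<open>A polynomial in x,y: finitely supported map from exponent pairs (i,j) (for x^i y^j) to coefficients.\<close>
type_synonym bipoly = "(nat \<times> nat) \<Rightarrow>\<^sub>0 complex"

definition bipoly_eval :: "bipoly \<Rightarrow> complex \<Rightarrow> complex \<Rightarrow> complex" where
  "bipoly_eval f x y = (\<Sum>(i,j)\<in>Poly_Mapping.keys f. Poly_Mapping.lookup f (i,j) * x ^ i * y ^ j)"

definition homogeneous_of_degree :: "bipoly \<Rightarrow> nat \<Rightarrow> bool" where
  "homogeneous_of_degree f d \<longleftrightarrow> (\<forall>(i,j)\<in>Poly_Mapping.keys f. i + j = d)"

text \<open>(a,b,c,e) stands for the normally ordered monomial x^a y^b dx^c dy^e.\<close>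
type_synonym weyl = "(nat \<times> nat \<times> nat \<times> nat) \<Rightarrow>\<^sub>0 complex"

definition ffac :: "nat \<Rightarrow> nat \<Rightarrow> complex" where
  "ffac n k = (if k \<le> n then of_nat (fact n) / of_nat (fact (n - k)) else 0)"

text \<open>Product in D_2, using dx^c x^a' = sum_k (c choose k) a'!/(a'-k)! x^(a'-k) dx^(c-k).\<close>
definition wmul :: "weyl \<Rightarrow> weyl \<Rightarrow> weyl" where
  "wmul P Q = (\<Sum>(a,b,c,e)\<in>Poly_Mapping.keys P. \<Sum>(a',b',c',e')\<in>Poly_Mapping.keys Q. \<Sum>k\<in>{..c}. \<Sum>l\<in>{..e}.
      Poly_Mapping.single (a + a' - k, b + b' - l, c + c' - k, e + e' - l)
        (Poly_Mapping.lookup P (a,b,c,e) * Poly_Mapping.lookup Q (a',b',c',e') *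
         of_nat (c choose k) * ffac a' k * of_nat (e choose l) * ffac b' l))"

definition wconst :: "complex \<Rightarrow> weyl" where
  "wconst z = Poly_Mapping.single (0,0,0,0) z"

primrec wpow :: "weyl \<Rightarrow> nat \<Rightarrow> weyl" where
  "wpow P 0 = wconst 1"
| "wpow P (Suc n) = wmul P (wpow P n)"

inductive_set left_ideal_gen :: "weyl set \<Rightarrow> weyl set" for S where
  zero: "0 \<in> left_ideal_gen S"
| step: "P \<in> S \<Longrightarrow> R \<in> left_ideal_gen S \<Longrightarrow> wmul Q P + R \<in> left_ideal_gen S"

definition pdx :: "(complex \<Rightarrow> complex \<Rightarrow> complex) \<Rightarrow> complex \<Rightarrow> complex \<Rightarrow> complex" where
  "pdx F = (\<lambda>x y. deriv (\<lambda>t. F t y) x)"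

definition pdy :: "(complex \<Rightarrow> complex \<Rightarrow> complex) \<Rightarrow> complex \<Rightarrow> complex \<Rightarrow> complex" where
  "pdy F = (\<lambda>x y. deriv (\<lambda>t. F x t) y)"

definition wact :: "weyl \<Rightarrow> (complex \<Rightarrow> complex \<Rightarrow> complex) \<Rightarrow> complex \<Rightarrow> complex \<Rightarrow> complex" where
  "wact P F = (\<lambda>x y. \<Sum>(a,b,c,e)\<in>Poly_Mapping.keys P.
      Poly_Mapping.lookup P (a,b,c,e) * x ^ a * y ^ b * (((pdx ^^ c) ((pdy ^^ e) F)) x y))"

text \<open>Ann(1/f): operators killing the rational function 1/f (checked on the dense open set where f is nonzero).\<close>
definition Ann_inv :: "bipoly \<Rightarrow> weyl set" where
  "Ann_inv f = {P. \<forall>x y. bipoly_eval f x y \<noteq> 0 \<longrightarrow>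
                     wact P (\<lambda>u v. 1 / bipoly_eval f u v) x y = 0}"

definition wweight :: "real \<times> real \<Rightarrow> nat \<times> nat \<times> nat \<times> nat \<Rightarrow> real" where
  "wweight \<omega> m = (case m of (a,b,c,e) \<Rightarrow>
      - fst \<omega> * real a - snd \<omega> * real b + fst \<omega> * real c + snd \<omega> * real e)"

definition initial_form :: "real \<times> real \<Rightarrow> weyl \<Rightarrow> weyl" where
  "initial_form \<omega> P =
     (if P = 0 then 0 else
      (let M = Max (wweight \<omega> ` Poly_Mapping.keys P) in
       \<Sum>m\<in>{m\<in>Poly_Mapping.keys P. wweight \<omega> m = M}. Poly_Mapping.single m (Poly_Mapping.lookup P m)))"

definition initial_ideal :: "real \<times> real \<Rightarrow> weyl set \<Rightarrow> weyl set" where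
  "initial_ideal \<omega> I = left_ideal_gen (initial_form \<omega> ` I)"

definition euler_s :: "real \<times> real \<Rightarrow> weyl" where
  "euler_s \<omega> = Poly_Mapping.single (1,0,1,0) (complex_of_real (fst \<omega>))
             + Poly_Mapping.single (0,1,0,1) (complex_of_real (snd \<omega>))"

definition poly_in_s :: "real \<times> real \<Rightarrow> complex poly \<Rightarrow> weyl" where
  "poly_in_s \<omega> p = (\<Sum>k\<le>Polynomial.degree p. wmul (wconst (coeff p k)) (wpow (euler_s \<omega>) k))"

definition b_function :: "weyl set \<Rightarrow> real \<times> real \<Rightarrow> complex poly" where
  "b_function I \<omega> = (THE b. lead_coeff b = 1 \<and>
       {p. poly_in_s \<omega> p \<in> initial_ideal \<omega> I} = {p. b dvd p})"

end

theory Submission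
  imports Defs
begin

text \<open>
  D_2 acts faithfully on C[x,y]. Polynomials in x dx and y dy, in particular b(s) for
  s = w1 x dx + w2 y dy, act diagonally on the monomials x^i y^j and are determined by their
  eigenvalue functions, b(s) by (i, j) \<mapsto> b(w1 i + w2 j). As f is homogeneous, the Euler operator
  E = x dx + y dy + d annihilates 1/f and is its own initial form. Modulo E, i.e. after
  substituting j = -(i + d), the product of the s + t w1 + (d - t) w2 (t = 0..d) acts by
  (w1 - w2)^(d+1) i (i+1) ... (i+d). Hence it suffices to find one more element of the initial
  ideal that acts modulo E by a nonzero multiple of the product of the i + s over some
  S \<subseteq> {0..d}.

  For w1 > w2 let x^a y^b be the monomial of f of least x-degree and write f = x^a g. The
  annihilator x g_y dx - x g_x dy + a g_y of 1/f has initial form c b y^(b-1) (x dx + a), and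
  multiplying by dy^(b-1) gives an operator acting by c b (i + a)(j + 1)...(j + b - 1), which is
  congruent to a multiple of (i + a)(i + a + 1)...(i + d - 1). If b = 0, then f = c x^d and
  y dy, acting by j = -(i + d) modulo E, does the job. The case w1 < w2 is symmetric, and for
  w1 = w2 the reduced product is s + d w1 = w1 E.
\<close>

definition falling_fact :: "nat \<Rightarrow> nat \<Rightarrow> nat" where
  "falling_fact n k = fact k * (n choose k)"

lemma ffac_eq_falling_fact: "ffac n k = of_nat (falling_fact n k)"
proof (cases "k \<le> n")
  case True
  have "(of_nat (fact n) :: complex) = of_nat (fact k * (n choose k)) * of_nat (fact (n - k))"
    using binomial_fact_lemma[OF True] by (metis mult.commute mult.left_commute of_nat_mult)
  thus ?thesis using True unfolding ffac_def falling_fact_def by (simp add: field_simps)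
qed (simp add: ffac_def falling_fact_def)

lemma falling_fact_0 [simp]: "falling_fact n 0 = 1"
  by (simp add: falling_fact_def)

lemma falling_fact_eq_0_iff: "falling_fact n k = 0 \<longleftrightarrow> n < k"
  by (simp add: falling_fact_def)

lemma falling_fact_mult_fact: "k \<le> n \<Longrightarrow> falling_fact n k * fact (n - k) = fact n"
  unfolding falling_fact_def using binomial_fact_lemma[of k n] by (simp add: ac_simps)

lemma falling_fact_add: "falling_fact (m + n) (m + k) = falling_fact (m + n) m * falling_fact n k"
proof (cases "k \<le> n")
  case True
  have "falling_fact (m + n) (m + k) * fact (n - k) = fact (m + n)"
    using falling_fact_mult_fact[of "m + k" "m + n"] True by simp
  moreover have "falling_fact (m + n) m * falling_fact n k * fact (n - k) = fact (m + n)"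
    using falling_fact_mult_fact[of k n] falling_fact_mult_fact[of m "m + n"] True
    by (simp add: mult.assoc)
  ultimately show ?thesis by (metis fact_nonzero mult_right_cancel)
qed (simp add: falling_fact_def binomial_eq_0)

lemma falling_fact_vandermonde:
  "(\<Sum>k\<le>c. (c choose k) * falling_fact a k * falling_fact n (c - k)) = falling_fact (a + n) c"
proof -
  have "(c choose k) * falling_fact a k * falling_fact n (c - k) = fact c * ((a choose k) * (n choose (c - k)))"
    if "k \<le> c" for k
  proof -
    have "(c choose k) * fact k * fact (c - k) = fact c"
      using binomial_fact_lemma[OF that] by (simp add: ac_simps)
    thus ?thesis unfolding falling_fact_def by (metis (no_types, lifting) mult.assoc mult.left_commute)
  qed
  hence "(\<Sum>k\<le>c. (c choose k) * falling_fact a k * falling_fact n (c - k))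
      = (\<Sum>k\<le>c. fact c * ((a choose k) * (n choose (c - k))))" by simp
  also have "\<dots> = fact c * ((a + n) choose c)" by (simp add: sum_distrib_left[symmetric] vandermonde)
  finally show ?thesis by (simp add: falling_fact_def)
qed

lemma falling_fact_vandermonde_shift:
  "(\<Sum>k\<le>c. (c choose k) * falling_fact a k * falling_fact i (c + c' - k))
    = falling_fact i c' * falling_fact (i - c' + a) c"
proof (cases "i < c'")
  case True
  have "falling_fact i (c + c' - k) = 0" if "k \<le> c" for k
    using that True by (simp add: falling_fact_eq_0_iff)
  moreover have "falling_fact i c' = 0" using True by (simp add: falling_fact_eq_0_iff)
  ultimately show ?thesis by simp
next
  case False
  then obtain n where n: "i = c' + n" by (metis le_add_diff_inverse not_less)
  have "(c choose k) * falling_fact a k * falling_fact i (c + c' - k)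
      = falling_fact i c' * ((c choose k) * falling_fact a k * falling_fact n (c - k))" if "k \<le> c" for k
    using that falling_fact_add[of c' n "c - k"] n by (simp add: add.commute add_diff_assoc2)
  hence "(\<Sum>k\<le>c. (c choose k) * falling_fact a k * falling_fact i (c + c' - k))
      = (\<Sum>k\<le>c. falling_fact i c' * ((c choose k) * falling_fact a k * falling_fact n (c - k)))"
    by (intro sum.cong) auto
  also have "\<dots> = falling_fact i c' * falling_fact (a + n) c"
    by (simp add: sum_distrib_left[symmetric] falling_fact_vandermonde)
  finally show ?thesis using n by (simp add: add.commute)
qed

lemma falling_fact_eq_prod: "of_nat (falling_fact (j + n) n) = (\<Prod>t\<in>{1..n}. of_nat j + of_nat t :: 'a::comm_semiring_1)"
proof (induction n)
  case (Suc n)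
  have "falling_fact (j + Suc n) (Suc n) * fact j = (j + Suc n) * (falling_fact (j + n) n * fact j)"
    using falling_fact_mult_fact[of "Suc n" "j + Suc n"] falling_fact_mult_fact[of n "j + n"] by simp
  hence "falling_fact (j + Suc n) (Suc n) = (j + Suc n) * falling_fact (j + n) n"
    by (metis mult.assoc mult_right_cancel fact_nonzero)
  thus ?case using Suc by (simp add: prod.nat_ivl_Suc' algebra_simps)
qed (simp add: falling_fact_def)

section \<open>The action of \<open>D\<^sub>2\<close> on \<open>\<complex>[x,y]\<close>\<close>

lemma sum_keys_add:
  fixes F :: "'a \<Rightarrow> 'b::comm_monoid_add \<Rightarrow> 'c::cancel_comm_monoid_add"
  assumes "\<And>m u v. F m (u + v) = F m u + F m v"
  shows "(\<Sum>m\<in>Poly_Mapping.keys (P + Q). F m (Poly_Mapping.lookup (P + Q) m))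
       = (\<Sum>m\<in>Poly_Mapping.keys P. F m (Poly_Mapping.lookup P m))
         + (\<Sum>m\<in>Poly_Mapping.keys Q. F m (Poly_Mapping.lookup Q m))"
proof -
  define S where "S = Poly_Mapping.keys P \<union> Poly_Mapping.keys Q"
  have F0: "F m 0 = 0" for m using assms[of m 0 0] by simp
  have on_S: "(\<Sum>m\<in>Poly_Mapping.keys X. F m (Poly_Mapping.lookup X m)) = (\<Sum>m\<in>S. F m (Poly_Mapping.lookup X m))"
    if "Poly_Mapping.keys X \<subseteq> S" for X
    by (rule sum.mono_neutral_left) (use that in \<open>auto simp: S_def in_keys_iff F0\<close>)
  have "Poly_Mapping.keys (P + Q) \<subseteq> S" using keys_add[of P Q] by (auto simp: S_def)
  hence "(\<Sum>m\<in>Poly_Mapping.keys (P + Q). F m (Poly_Mapping.lookup (P + Q) m))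
      = (\<Sum>m\<in>S. F m (Poly_Mapping.lookup P m)) + (\<Sum>m\<in>S. F m (Poly_Mapping.lookup Q m))"
    by (simp only: on_S) (simp add: lookup_add assms sum.distrib)
  also have "\<dots> = (\<Sum>m\<in>Poly_Mapping.keys P. F m (Poly_Mapping.lookup P m))
         + (\<Sum>m\<in>Poly_Mapping.keys Q. F m (Poly_Mapping.lookup Q m))"
    by (simp add: on_S S_def)
  finally show ?thesis .
qed

lemma poly_mapping_sum_single:
  "P = (\<Sum>m\<in>Poly_Mapping.keys P. Poly_Mapping.single m (Poly_Mapping.lookup P m))"
  by (rule poly_mapping_eqI) (simp add: lookup_sum lookup_single when_def in_keys_iff)

lemma single_sum: "Poly_Mapping.single k (\<Sum>x\<in>A. f x) = (\<Sum>x\<in>A. Poly_Mapping.single k (f x))"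
  by (induction A rule: infinite_finite_induct) (auto simp: single_add)

text \<open>The monomial x^a y^b dx^c dy^e sends x^i y^j to i!/(i-c)! j!/(j-e)! x^(i-c+a) y^(j-e+b);
  the truncated subtractions only matter where these coefficients vanish.\<close>

fun shift_mono :: "nat \<times> nat \<times> nat \<times> nat \<Rightarrow> nat \<times> nat \<Rightarrow> nat \<times> nat" where
  "shift_mono (a,b,c,e) (i,j) = (i - c + a, j - e + b)"

fun shift_coeff :: "nat \<times> nat \<times> nat \<times> nat \<Rightarrow> nat \<times> nat \<Rightarrow> complex" where
  "shift_coeff (a,b,c,e) (i,j) = ffac i c * ffac j e"

definition poly_act :: "weyl \<Rightarrow> bipoly \<Rightarrow> bipoly" where
  "poly_act P g = (\<Sum>m\<in>Poly_Mapping.keys P. \<Sum>n\<in>Poly_Mapping.keys g.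
      Poly_Mapping.single (shift_mono m n)
        (Poly_Mapping.lookup P m * Poly_Mapping.lookup g n * shift_coeff m n))"

lemma poly_act_add_left: "poly_act (P + Q) g = poly_act P g + poly_act Q g"
  unfolding poly_act_def
  by (rule sum_keys_add[where F = "\<lambda>m v. \<Sum>n\<in>Poly_Mapping.keys g. Poly_Mapping.single (shift_mono m n)
        (v * Poly_Mapping.lookup g n * shift_coeff m n)"])
     (simp add: distrib_right single_add sum.distrib)

lemma poly_act_add_right: "poly_act P (g + h) = poly_act P g + poly_act P h"
proof -
  have "(\<Sum>n\<in>Poly_Mapping.keys (g + h). F n (Poly_Mapping.lookup (g + h) n))
      = (\<Sum>n\<in>Poly_Mapping.keys g. F n (Poly_Mapping.lookup g n)) + (\<Sum>n\<in>Poly_Mapping.keys h. F n (Poly_Mapping.lookup h n))"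
    if "F = (\<lambda>n v. Poly_Mapping.single (shift_mono m n) (Poly_Mapping.lookup P m * v * shift_coeff m n))" for m F
    by (rule sum_keys_add) (simp add: that distrib_right distrib_left single_add)
  thus ?thesis unfolding poly_act_def by (simp add: sum.distrib)
qed

lemma poly_act_zero_left [simp]: "poly_act 0 g = 0"
  and poly_act_zero_right [simp]: "poly_act P 0 = 0"
  by (simp_all add: poly_act_def)

lemma poly_act_diff_left: "poly_act (P - Q) g = poly_act P g - poly_act Q g"
  using poly_act_add_left[of "P - Q" Q g] by simp

lemma poly_act_sum_left: "poly_act (\<Sum>x\<in>A. P x) g = (\<Sum>x\<in>A. poly_act (P x) g)"
  by (induction A rule: infinite_finite_induct) (auto simp: poly_act_add_left)

lemma poly_act_sum_right: "poly_act P (\<Sum>x\<in>A. g x) = (\<Sum>x\<in>A. poly_act P (g x))"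
  by (induction A rule: infinite_finite_induct) (auto simp: poly_act_add_right)

lemma poly_act_single_single:
  "poly_act (Poly_Mapping.single m v) (Poly_Mapping.single n w)
    = Poly_Mapping.single (shift_mono m n) (v * w * shift_coeff m n)"
  by (simp add: poly_act_def)

lemma poly_act_expand_left:
  "poly_act P g = (\<Sum>m\<in>Poly_Mapping.keys P. poly_act (Poly_Mapping.single m (Poly_Mapping.lookup P m)) g)"
proof -
  have "poly_act P g = poly_act (\<Sum>m\<in>Poly_Mapping.keys P. Poly_Mapping.single m (Poly_Mapping.lookup P m)) g"
    by (simp only: poly_mapping_sum_single[symmetric])
  thus ?thesis by (simp add: poly_act_sum_left)
qed

lemma poly_act_expand_right:
  "poly_act P g = (\<Sum>n\<in>Poly_Mapping.keys g. poly_act P (Poly_Mapping.single n (Poly_Mapping.lookup g n)))"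
proof -
  have "poly_act P g = poly_act P (\<Sum>n\<in>Poly_Mapping.keys g. Poly_Mapping.single n (Poly_Mapping.lookup g n))"
    by (simp only: poly_mapping_sum_single[symmetric])
  thus ?thesis by (simp add: poly_act_sum_right)
qed

lemma wmul_single_single:
  "wmul (Poly_Mapping.single (a,b,c,e) v) (Poly_Mapping.single (a',b',c',e') w) =
    (\<Sum>k\<le>c. \<Sum>l\<le>e. Poly_Mapping.single (a + a' - k, b + b' - l, c + c' - k, e + e' - l)
        (v * w * of_nat (c choose k) * ffac a' k * of_nat (e choose l) * ffac b' l))"
  by (cases "v = 0"; cases "w = 0") (simp_all add: wmul_def)

lemma wmul_expand: "wmul P Q = (\<Sum>m\<in>Poly_Mapping.keys P. \<Sum>m'\<in>Poly_Mapping.keys Q.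
    wmul (Poly_Mapping.single m (Poly_Mapping.lookup P m)) (Poly_Mapping.single m' (Poly_Mapping.lookup Q m')))"
  unfolding wmul_def by (simp add: in_keys_iff case_prod_beta)

lemma poly_act_wmul_single:
  "poly_act (wmul (Poly_Mapping.single m v) (Poly_Mapping.single m' w)) (Poly_Mapping.single n u)
   = poly_act (Poly_Mapping.single m v) (poly_act (Poly_Mapping.single m' w) (Poly_Mapping.single n u))"
proof -
  obtain a b c e where m: "m = (a,b,c,e)" by (cases m) auto
  obtain a' b' c' e' where m': "m' = (a',b',c',e')" by (cases m') auto
  obtain i j where n: "n = (i,j)" by (cases n) auto
  define I where "I = i - c' + a' - c + a"
  define J where "J = j - e' + b' - e + b"
  define tx where "tx k = (of_nat ((c choose k) * falling_fact a' k * falling_fact i (c + c' - k)) :: complex)" for k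
  define ty where "ty l = (of_nat ((e choose l) * falling_fact b' l * falling_fact j (e + e' - l)) :: complex)" for l
  have sum_tx: "(\<Sum>k\<le>c. tx k) = ffac i c' * ffac (i - c' + a') c"
    unfolding tx_def ffac_eq_falling_fact of_nat_sum[symmetric] falling_fact_vandermonde_shift by simp
  have sum_ty: "(\<Sum>l\<le>e. ty l) = ffac j e' * ffac (j - e' + b') e"
    unfolding ty_def ffac_eq_falling_fact of_nat_sum[symmetric] falling_fact_vandermonde_shift by simp
  have summand: "poly_act (Poly_Mapping.single (a + a' - k, b + b' - l, c + c' - k, e + e' - l)
        (v * w * of_nat (c choose k) * ffac a' k * of_nat (e choose l) * ffac b' l)) (Poly_Mapping.single n u)
     = Poly_Mapping.single (I, J) (v * w * u * (tx k * ty l))" if "k \<le> c" "l \<le> e" for k l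
  proof -
    have "poly_act (Poly_Mapping.single (a + a' - k, b + b' - l, c + c' - k, e + e' - l)
        (v * w * of_nat (c choose k) * ffac a' k * of_nat (e choose l) * ffac b' l)) (Poly_Mapping.single n u)
      = Poly_Mapping.single (i - (c + c' - k) + (a + a' - k), j - (e + e' - l) + (b + b' - l))
          (v * w * u * (tx k * ty l))"
      by (simp add: poly_act_single_single n tx_def ty_def ffac_eq_falling_fact ac_simps)
    moreover have "i - (c + c' - k) + (a + a' - k) = I \<and> j - (e + e' - l) + (b + b' - l) = J"
      if "tx k * ty l \<noteq> 0"
    proof -
      have "falling_fact a' k \<noteq> 0" "falling_fact i (c + c' - k) \<noteq> 0"
        "falling_fact b' l \<noteq> 0" "falling_fact j (e + e' - l) \<noteq> 0"
        using that by (auto simp: tx_def ty_def)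
      thus ?thesis using \<open>k \<le> c\<close> \<open>l \<le> e\<close> by (auto simp: I_def J_def falling_fact_eq_0_iff)
    qed
    ultimately show ?thesis by (cases "tx k * ty l = 0") auto
  qed
  have "poly_act (wmul (Poly_Mapping.single m v) (Poly_Mapping.single m' w)) (Poly_Mapping.single n u)
      = (\<Sum>k\<le>c. \<Sum>l\<le>e. Poly_Mapping.single (I, J) (v * w * u * (tx k * ty l)))"
    unfolding m m' wmul_single_single poly_act_sum_left using summand by simp
  also have "\<dots> = Poly_Mapping.single (I, J) (v * w * u * ((\<Sum>k\<le>c. tx k) * (\<Sum>l\<le>e. ty l)))"
    by (simp add: single_sum[symmetric] sum_distrib_left sum_distrib_right, subst sum.swap, rule refl)
  also have "\<dots> = poly_act (Poly_Mapping.single m v) (poly_act (Poly_Mapping.single m' w) (Poly_Mapping.single n u))"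
    unfolding sum_tx sum_ty m m' n poly_act_single_single by (simp add: I_def J_def ac_simps)
  finally show ?thesis .
qed

lemma poly_act_wmul: "poly_act (wmul P Q) g = poly_act P (poly_act Q g)"
proof -
  let ?s = "\<lambda>X m. Poly_Mapping.single m (Poly_Mapping.lookup X m)"
  have "poly_act (wmul P Q) g
      = (\<Sum>m\<in>Poly_Mapping.keys P. \<Sum>m'\<in>Poly_Mapping.keys Q. poly_act (wmul (?s P m) (?s Q m')) g)"
    by (subst wmul_expand) (simp only: poly_act_sum_left)
  also have "\<dots> = (\<Sum>m\<in>Poly_Mapping.keys P. \<Sum>m'\<in>Poly_Mapping.keys Q. \<Sum>n\<in>Poly_Mapping.keys g.
       poly_act (?s P m) (poly_act (?s Q m') (?s g n)))"
    by (subst poly_act_expand_right) (simp only: poly_act_wmul_single)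
  also have "\<dots> = (\<Sum>m\<in>Poly_Mapping.keys P. poly_act (?s P m) (poly_act Q g))"
    by (subst (3) poly_act_expand_left, subst poly_act_expand_right) (simp only: poly_act_sum_right)
  also have "\<dots> = poly_act P (poly_act Q g)"
    by (rule poly_act_expand_left[symmetric])
  finally show ?thesis .
qed

lemma poly_act_wconst_single: "poly_act (wconst z) (Poly_Mapping.single n u) = Poly_Mapping.single n (z * u)"
  by (cases n) (simp add: wconst_def poly_act_single_single ffac_def ac_simps)

text \<open>Faithfulness: on x^c y^e, a monomial x^a y^b dx^c dy^e of P of minimal order c + e is the only
  one that contributes to the coefficient of x^a y^b.\<close>

lemma weyl_eq_0I:
  assumes "\<And>i j. poly_act P (Poly_Mapping.single (i,j) 1) = 0"
  shows "P = 0"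
proof (rule ccontr)
  let ?ord = "\<lambda>(a::nat,b::nat,c::nat,e::nat). c + e"
  assume "P \<noteq> 0"
  then obtain m where "m \<in> Poly_Mapping.keys P" by (metis keys_eq_empty ex_in_conv)
  then obtain m0 where m0: "m0 \<in> Poly_Mapping.keys P"
    and minimal: "\<And>m. m \<in> Poly_Mapping.keys P \<Longrightarrow> ?ord m0 \<le> ?ord m"
    using ex_has_least_nat[of "\<lambda>m. m \<in> Poly_Mapping.keys P" m ?ord] by blast
  obtain a b c e where m0_eq: "m0 = (a,b,c,e)" by (cases m0) auto
  let ?g = "\<lambda>m. if shift_mono m (c,e) = (a,b) then Poly_Mapping.lookup P m * shift_coeff m (c,e) else 0"
  have others: "?g m = 0" if "m \<in> Poly_Mapping.keys P - {m0}" for m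
  proof -
    obtain a' b' c' e' where m: "m = (a',b',c',e')" by (cases m) auto
    show ?thesis
    proof (cases "shift_coeff m (c,e) = 0")
      case False
      hence "c' \<le> c" "e' \<le> e" by (auto simp: m ffac_def split: if_splits)
      moreover have "c + e \<le> c' + e'" using minimal[of m] that by (simp add: m m0_eq)
      ultimately have "c' = c" "e' = e" by auto
      thus ?thesis using that by (auto simp: m m0_eq)
    qed simp
  qed
  have "Poly_Mapping.lookup (poly_act P (Poly_Mapping.single (c,e) 1)) (a,b) = sum ?g (Poly_Mapping.keys P)"
    by (simp add: poly_act_def lookup_sum lookup_single when_def)
  also have "\<dots> = sum ?g {m0}"
    by (rule sum.mono_neutral_right) (use m0 others in auto)
  also have "\<dots> = Poly_Mapping.lookup P m0 * (fact c * fact e)"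
    by (simp add: m0_eq ffac_def)
  finally show False using m0 assms[of c e] by (simp add: in_keys_iff)
qed

lemma weyl_eqI:
  assumes "\<And>i j. poly_act P (Poly_Mapping.single (i,j) 1) = poly_act Q (Poly_Mapping.single (i,j) 1)"
  shows "P = Q"
  using weyl_eq_0I[of "P - Q"] assms by (simp add: poly_act_diff_left)

lemma wmul_assoc: "wmul (wmul P Q) R = wmul P (wmul Q R)"
  by (rule weyl_eqI) (simp add: poly_act_wmul)

lemma wmul_add_right: "wmul P (Q + R) = wmul P Q + wmul P R"
  by (rule weyl_eqI) (simp add: poly_act_wmul poly_act_add_left poly_act_add_right)

lemma wmul_wconst_left: "wmul (wconst z) P = (\<Sum>m\<in>Poly_Mapping.keys P. Poly_Mapping.single m (z * Poly_Mapping.lookup P m))"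
  by (simp add: wmul_def wconst_def ffac_def case_prod_beta)

lemma wmul_wconst_1: "wmul (wconst 1) P = P"
  by (simp add: wmul_wconst_left flip: poly_mapping_sum_single)

lemma wmul_wconst_minus_1: "wmul (wconst (-1)) P = - P"
  by (simp add: wmul_wconst_left single_uminus sum_negf flip: poly_mapping_sum_single)

lemma left_ideal_gen_add:
  "P \<in> left_ideal_gen S \<Longrightarrow> Q \<in> left_ideal_gen S \<Longrightarrow> P + Q \<in> left_ideal_gen S"
  by (induction P rule: left_ideal_gen.induct) (simp_all add: add.assoc left_ideal_gen.step)

lemma left_ideal_gen_wmul: "P \<in> left_ideal_gen S \<Longrightarrow> wmul W P \<in> left_ideal_gen S"
proof (induction P rule: left_ideal_gen.induct)
  case zero thus ?case by (simp add: wmul_def left_ideal_gen.zero)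
next
  case (step P R Q)
  thus ?case by (simp add: wmul_add_right wmul_assoc left_ideal_gen.step flip: wmul_assoc)
qed

lemma left_ideal_gen_base: "P \<in> S \<Longrightarrow> P \<in> left_ideal_gen S"
  using left_ideal_gen.step[of P S 0 "wconst 1"] left_ideal_gen.zero by (simp add: wmul_wconst_1)

lemma left_ideal_gen_diff:
  "P \<in> left_ideal_gen S \<Longrightarrow> Q \<in> left_ideal_gen S \<Longrightarrow> P - Q \<in> left_ideal_gen S"
  using left_ideal_gen_add[of P S "- Q"] left_ideal_gen_wmul[of Q S "wconst (-1)"]
  by (simp add: wmul_wconst_minus_1)

section \<open>Operators acting diagonally on monomials\<close>

definition diagonal :: "weyl \<Rightarrow> (nat \<Rightarrow> nat \<Rightarrow> complex) \<Rightarrow> bool" where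
  "diagonal P h \<longleftrightarrow> (\<forall>i j u. poly_act P (Poly_Mapping.single (i,j) u) = Poly_Mapping.single (i,j) (u * h i j))"

lemma diagonal_unique: "diagonal P h \<Longrightarrow> diagonal Q h \<Longrightarrow> P = Q"
  by (rule weyl_eqI) (simp add: diagonal_def)

lemma diagonal_cong: "diagonal P h \<Longrightarrow> (\<And>i j. h i j = k i j) \<Longrightarrow> diagonal P k"
  by (simp add: diagonal_def)

lemma diagonal_add: "diagonal P h \<Longrightarrow> diagonal Q k \<Longrightarrow> diagonal (P + Q) (\<lambda>i j. h i j + k i j)"
  by (simp add: diagonal_def poly_act_add_left distrib_left single_add)

lemma diagonal_wmul: "diagonal P h \<Longrightarrow> diagonal Q k \<Longrightarrow> diagonal (wmul P Q) (\<lambda>i j. h i j * k i j)"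
  by (simp add: diagonal_def poly_act_wmul ac_simps)

lemma diagonal_sum:
  "(\<And>x. x \<in> A \<Longrightarrow> diagonal (P x) (h x)) \<Longrightarrow> diagonal (\<Sum>x\<in>A. P x) (\<lambda>i j. \<Sum>x\<in>A. h x i j)"
proof (induction A rule: infinite_finite_induct)
  case (insert x F)
  thus ?case using diagonal_add[of "P x" "h x" "\<Sum>x\<in>F. P x"] by simp
qed (simp_all add: diagonal_def)

lemma diagonal_wconst: "diagonal (wconst z) (\<lambda>i j. z)"
  by (simp add: diagonal_def poly_act_wconst_single mult.commute)

lemma diagonal_wpow: "diagonal P h \<Longrightarrow> diagonal (wpow P n) (\<lambda>i j. h i j ^ n)"
  by (induction n) (simp_all add: diagonal_wconst diagonal_wmul)

lemma diagonal_theta_x: "diagonal (Poly_Mapping.single (1,0,1,0) z) (\<lambda>i j. z * of_nat i)"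
proof -
  have "poly_act (Poly_Mapping.single (1,0,1,0) z) (Poly_Mapping.single (i,j) u) = Poly_Mapping.single (i,j) (u * (z * of_nat i))"
    for i j u by (cases i) (simp_all add: poly_act_single_single ffac_eq_falling_fact falling_fact_def ac_simps)
  thus ?thesis by (simp add: diagonal_def)
qed

lemma diagonal_theta_y: "diagonal (Poly_Mapping.single (0,1,0,1) z) (\<lambda>i j. z * of_nat j)"
proof -
  have "poly_act (Poly_Mapping.single (0,1,0,1) z) (Poly_Mapping.single (i,j) u) = Poly_Mapping.single (i,j) (u * (z * of_nat j))"
    for i j u by (cases j) (simp_all add: poly_act_single_single ffac_eq_falling_fact falling_fact_def ac_simps)
  thus ?thesis by (simp add: diagonal_def)
qed

lemma diagonal_euler_s:
  "diagonal (euler_s \<omega>) (\<lambda>i j. of_real (fst \<omega>) * of_nat i + of_real (snd \<omega>) * of_nat j)"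
  unfolding euler_s_def by (rule diagonal_add[OF diagonal_theta_x diagonal_theta_y])

lemma diagonal_poly_in_s:
  "diagonal (poly_in_s \<omega> p) (\<lambda>i j. poly p (of_real (fst \<omega>) * of_nat i + of_real (snd \<omega>) * of_nat j))"
proof -
  have "diagonal (poly_in_s \<omega> p) (\<lambda>i j. \<Sum>k\<le>degree p.
      coeff p k * (of_real (fst \<omega>) * of_nat i + of_real (snd \<omega>) * of_nat j) ^ k)"
    unfolding poly_in_s_def
    by (rule diagonal_sum, rule diagonal_wmul[OF diagonal_wconst diagonal_wpow[OF diagonal_euler_s]])
  thus ?thesis by (rule diagonal_cong) (simp add: poly_altdef)
qed

lemma poly_in_s_add: "poly_in_s \<omega> (p + q) = poly_in_s \<omega> p + poly_in_s \<omega> q"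
  by (rule diagonal_unique[OF diagonal_poly_in_s],
      rule diagonal_cong[OF diagonal_add[OF diagonal_poly_in_s diagonal_poly_in_s]]) simp

lemma poly_in_s_mult: "poly_in_s \<omega> (p * q) = wmul (poly_in_s \<omega> p) (poly_in_s \<omega> q)"
  by (rule diagonal_unique[OF diagonal_poly_in_s],
      rule diagonal_cong[OF diagonal_wmul[OF diagonal_poly_in_s diagonal_poly_in_s]]) simp

lemma poly_in_s_diff: "poly_in_s \<omega> (p - q) = poly_in_s \<omega> p - poly_in_s \<omega> q"
  using poly_in_s_add[of \<omega> "p - q" q] by simp

definition b_ideal :: "real \<times> real \<Rightarrow> weyl set \<Rightarrow> complex poly set" where
  "b_ideal \<omega> I = {p. poly_in_s \<omega> p \<in> initial_ideal \<omega> I}"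

lemma b_ideal_diff: "p \<in> b_ideal \<omega> I \<Longrightarrow> q \<in> b_ideal \<omega> I \<Longrightarrow> p - q \<in> b_ideal \<omega> I"
  unfolding b_ideal_def initial_ideal_def by (simp add: poly_in_s_diff left_ideal_gen_diff)

lemma b_ideal_mult: "p \<in> b_ideal \<omega> I \<Longrightarrow> q * p \<in> b_ideal \<omega> I"
  unfolding b_ideal_def initial_ideal_def by (simp add: poly_in_s_mult left_ideal_gen_wmul)

lemma monic_dvd_antisym:
  fixes p q :: "'a::field poly"
  assumes "p dvd q" "q dvd p" "lead_coeff p = 1" "lead_coeff q = 1"
  shows "p = q"
proof -
  obtain k where k: "q = p * k" using assms(1) by (rule dvdE)
  have "p \<noteq> 0" "q \<noteq> 0" using assms(3,4) by auto
  hence "degree p = degree q" using dvd_imp_degree_le assms(1,2) by (meson antisym)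
  hence "degree k = 0" using k \<open>q \<noteq> 0\<close> by (auto simp: degree_mult_eq)
  moreover have "lead_coeff k = 1" using k assms(3,4) by (simp add: lead_coeff_mult)
  ultimately have "k = 1" by (metis degree_0_id one_pCons)
  thus ?thesis using k by simp
qed
lemma b_ideal_principal:
  assumes "R \<in> b_ideal \<omega> I" "R \<noteq> 0"
  obtains b where "lead_coeff b = 1" "b_ideal \<omega> I = {p. b dvd p}"
proof -
  obtain b0 where b0: "b0 \<in> b_ideal \<omega> I" "b0 \<noteq> 0"
    and minimal: "\<And>q. q \<in> b_ideal \<omega> I \<and> q \<noteq> 0 \<Longrightarrow> degree b0 \<le> degree q"
    using ex_has_least_nat[of "\<lambda>q. q \<in> b_ideal \<omega> I \<and> q \<noteq> 0" R degree] assms by blast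
  define b where "b = [:inverse (lead_coeff b0):] * b0"
  have b_in: "b \<in> b_ideal \<omega> I" unfolding b_def by (rule b_ideal_mult[OF b0(1)])
  have monic: "lead_coeff b = 1" using b0(2) by (simp add: b_def lead_coeff_mult)
  hence "b \<noteq> 0" by auto
  have "degree b = degree b0" using b0(2) by (simp add: b_def)
  have "b dvd p" if "p \<in> b_ideal \<omega> I" for p
  proof (rule ccontr)
    assume "\<not> b dvd p"
    hence "p mod b \<noteq> 0" by (simp add: mod_eq_0_iff_dvd)
    moreover have "p mod b = p - (p div b) * b" by (metis minus_div_mult_eq_mod)
    hence "p mod b \<in> b_ideal \<omega> I" using b_ideal_diff[OF that b_ideal_mult[OF b_in]] by simp
    ultimately have "degree b0 \<le> degree (p mod b)" using minimal by blast
    moreover have "degree (p mod b) < degree b" using degree_mod_less' \<open>b \<noteq> 0\<close> \<open>p mod b \<noteq> 0\<close> by blast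
    ultimately show False using \<open>degree b = degree b0\<close> by simp
  qed
  moreover have "p \<in> b_ideal \<omega> I" if "b dvd p" for p
    using that b_ideal_mult[OF b_in] by (auto simp: mult.commute elim!: dvdE)
  ultimately have "b_ideal \<omega> I = {p. b dvd p}" by blast
  with monic show thesis by (rule that)
qed

lemma b_function_dvd:
  assumes "poly_in_s \<omega> R \<in> initial_ideal \<omega> I" "R \<noteq> 0"
  shows "b_function I \<omega> dvd R"
proof -
  obtain b where b: "lead_coeff b = 1" "b_ideal \<omega> I = {p. b dvd p}"
    using b_ideal_principal[of R \<omega> I] assms by (auto simp: b_ideal_def)
  have "b_function I \<omega> = b"
    unfolding b_function_def
  proof (rule the_equality)
    fix b' assume b': "lead_coeff b' = 1 \<and> {p. poly_in_s \<omega> p \<in> initial_ideal \<omega> I} = {p. b' dvd p}"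
    hence "b' dvd b" "b dvd b'" using b by (auto simp: b_ideal_def)
    thus "b' = b" using b(1) b' by (intro monic_dvd_antisym) simp_all
  qed (use b in \<open>simp add: b_ideal_def\<close>)
  thus ?thesis using assms b by (auto simp: b_ideal_def)
qed

section \<open>Operators annihilating \<open>1/f\<close>\<close>

definition bipoly_dx :: "bipoly \<Rightarrow> complex \<Rightarrow> complex \<Rightarrow> complex" where
  "bipoly_dx f x y = (\<Sum>(i,j)\<in>Poly_Mapping.keys f. Poly_Mapping.lookup f (i,j) * of_nat i * x ^ (i - 1) * y ^ j)"

definition bipoly_dy :: "bipoly \<Rightarrow> complex \<Rightarrow> complex \<Rightarrow> complex" where
  "bipoly_dy f x y = (\<Sum>(i,j)\<in>Poly_Mapping.keys f. Poly_Mapping.lookup f (i,j) * of_nat j * x ^ i * y ^ (j - 1))"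

lemma has_field_derivative_bipoly_eval_x:
  "((\<lambda>t. bipoly_eval f t y) has_field_derivative bipoly_dx f x y) (at x)"
  unfolding bipoly_eval_def bipoly_dx_def case_prod_beta
  by (rule DERIV_sum) (auto intro!: derivative_eq_intros)

lemma has_field_derivative_bipoly_eval_y:
  "((\<lambda>t. bipoly_eval f x t) has_field_derivative bipoly_dy f x y) (at y)"
  unfolding bipoly_eval_def bipoly_dy_def case_prod_beta
  by (rule DERIV_sum) (auto intro!: derivative_eq_intros)

definition inverse_fun :: "bipoly \<Rightarrow> complex \<Rightarrow> complex \<Rightarrow> complex" where
  "inverse_fun f = (\<lambda>u v. 1 / bipoly_eval f u v)"

lemma Ann_inv_eq: "Ann_inv f = {P. \<forall>x y. bipoly_eval f x y \<noteq> 0 \<longrightarrow> wact P (inverse_fun f) x y = 0}"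
  unfolding Ann_inv_def inverse_fun_def ..

lemma pdx_inverse_fun:
  assumes "bipoly_eval f x y \<noteq> 0"
  shows "pdx (inverse_fun f) x y = - bipoly_dx f x y / (bipoly_eval f x y)^2"
proof -
  have "deriv (\<lambda>t. inverse (bipoly_eval f t y)) x = - (bipoly_dx f x y * inverse (bipoly_eval f x y ^ Suc (Suc 0)))"
    by (rule DERIV_imp_deriv, rule DERIV_inverse_fun[OF has_field_derivative_bipoly_eval_x assms])
  thus ?thesis by (simp add: pdx_def inverse_fun_def inverse_eq_divide power2_eq_square)
qed

lemma pdy_inverse_fun:
  assumes "bipoly_eval f x y \<noteq> 0"
  shows "pdy (inverse_fun f) x y = - bipoly_dy f x y / (bipoly_eval f x y)^2"
proof -
  have "deriv (\<lambda>t. inverse (bipoly_eval f x t)) y = - (bipoly_dy f x y * inverse (bipoly_eval f x y ^ Suc (Suc 0)))"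
    by (rule DERIV_imp_deriv, rule DERIV_inverse_fun[OF has_field_derivative_bipoly_eval_y assms])
  thus ?thesis by (simp add: pdy_def inverse_fun_def inverse_eq_divide power2_eq_square)
qed

lemma first_order_inverse_fun_eq_0:
  assumes "bipoly_eval f x y \<noteq> 0"
    and "A * bipoly_dx f x y + B * bipoly_dy f x y = C * bipoly_eval f x y"
  shows "A * pdx (inverse_fun f) x y + B * pdy (inverse_fun f) x y + C * inverse_fun f x y = 0"
proof -
  have "A * pdx (inverse_fun f) x y + B * pdy (inverse_fun f) x y + C * inverse_fun f x y
      = (C * bipoly_eval f x y - (A * bipoly_dx f x y + B * bipoly_dy f x y)) / (bipoly_eval f x y)^2"
    unfolding pdx_inverse_fun[OF assms(1)] pdy_inverse_fun[OF assms(1)]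
    using assms(1) by (simp add: inverse_fun_def field_simps power2_eq_square)
  thus ?thesis using assms(2) by simp
qed

lemma wact_add: "wact (P + Q) F x y = wact P F x y + wact Q F x y"
proof -
  let ?T = "\<lambda>m v. case m of (a,b,c,e) \<Rightarrow> v * x ^ a * y ^ b * (((pdx ^^ c) ((pdy ^^ e) F)) x y)"
  have "wact R F x y = (\<Sum>m\<in>Poly_Mapping.keys R. ?T m (Poly_Mapping.lookup R m))" for R
    unfolding wact_def by (simp add: case_prod_beta)
  moreover have "?T m (u + v) = ?T m u + ?T m v" for m u v
    by (simp add: distrib_right split: prod.splits)
  ultimately show ?thesis using sum_keys_add[of ?T P Q] by simp
qed

lemma wact_zero [simp]: "wact 0 F x y = 0"
  by (simp add: wact_def)

lemma wact_sum: "wact (\<Sum>k\<in>A. P k) F x y = (\<Sum>k\<in>A. wact (P k) F x y)"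
  by (induction A rule: infinite_finite_induct) (simp_all add: wact_add)

lemma wact_single:
  "wact (Poly_Mapping.single (a,b,c,e) v) F x y = v * x ^ a * y ^ b * (((pdx ^^ c) ((pdy ^^ e) F)) x y)"
  by (cases "v = 0") (simp_all add: wact_def)

lemma mult_of_nat_power_pred: "x * (of_nat i * x ^ (i - 1)) = of_nat i * (x :: 'a::comm_semiring_1) ^ i"
  by (cases i) (simp_all add: algebra_simps)

lemma homogeneous_of_degreeD: "homogeneous_of_degree f d \<Longrightarrow> (i,j) \<in> Poly_Mapping.keys f \<Longrightarrow> i + j = d"
  unfolding homogeneous_of_degree_def by blast

lemma euler_identity:
  assumes "homogeneous_of_degree f d"
  shows "x * bipoly_dx f x y + y * bipoly_dy f x y = of_nat d * bipoly_eval f x y"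
proof -
  have "x * (c * of_nat i * x ^ (i - 1) * y ^ j) + y * (c * of_nat j * x ^ i * y ^ (j - 1))
      = of_nat d * (c * x ^ i * y ^ j)" if "(i,j) \<in> Poly_Mapping.keys f" for c i j
  proof -
    have "x * (c * of_nat i * x ^ (i - 1) * y ^ j) + y * (c * of_nat j * x ^ i * y ^ (j - 1))
        = c * y ^ j * (x * (of_nat i * x ^ (i - 1))) + c * x ^ i * (y * (of_nat j * y ^ (j - 1)))"
      by (simp add: algebra_simps)
    also have "\<dots> = of_nat (i + j) * (c * x ^ i * y ^ j)"
      by (simp only: mult_of_nat_power_pred) (simp add: algebra_simps)
    finally show ?thesis using homogeneous_of_degreeD[OF assms that] by simp
  qed
  thus ?thesis
    unfolding bipoly_dx_def bipoly_dy_def bipoly_eval_def sum_distrib_left sum.distrib[symmetric]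
    by (intro sum.cong) auto
qed

definition euler_op :: "nat \<Rightarrow> weyl" where
  "euler_op d = Poly_Mapping.single (1,0,1,0) 1 + Poly_Mapping.single (0,1,0,1) 1 + wconst (of_nat d)"

lemma euler_op_mem_Ann_inv:
  assumes "homogeneous_of_degree f d"
  shows "euler_op d \<in> Ann_inv f"
  unfolding Ann_inv_eq
proof (intro CollectI allI impI)
  fix x y assume "bipoly_eval f x y \<noteq> 0"
  from first_order_inverse_fun_eq_0[OF this euler_identity[OF assms]]
  show "wact (euler_op d) (inverse_fun f) x y = 0"
    by (simp add: euler_op_def wconst_def wact_add wact_single)
qed

lemma diagonal_euler_op: "diagonal (euler_op d) (\<lambda>i j. of_nat i + of_nat j + of_nat d)"
  unfolding euler_op_def
  by (rule diagonal_cong[OF diagonal_add[OF diagonal_add[OF diagonal_theta_x diagonal_theta_y] diagonal_wconst]]) simp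

text \<open>Writing f = x^a g, this is x g_y dx - x g_x dy + a g_y, which kills 1/f because
  x g_y f_x - x g_x f_y = a g_y f.\<close>

definition ann_op_x_term :: "bipoly \<Rightarrow> nat \<Rightarrow> nat \<times> nat \<Rightarrow> weyl" where
  "ann_op_x_term f a = (\<lambda>(i,j).
      Poly_Mapping.single (i - a + 1, j - 1, 1, 0) (Poly_Mapping.lookup f (i,j) * of_nat j)
    + Poly_Mapping.single (i - a, j, 0, 1) (- (Poly_Mapping.lookup f (i,j) * of_nat (i - a)))
    + Poly_Mapping.single (i - a, j - 1, 0, 0) (of_nat a * (Poly_Mapping.lookup f (i,j) * of_nat j)))"

definition ann_op_x :: "bipoly \<Rightarrow> nat \<Rightarrow> weyl" where
  "ann_op_x f a = (\<Sum>k\<in>Poly_Mapping.keys f. ann_op_x_term f a k)"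

lemma ann_op_x_mem_Ann_inv:
  assumes a_le: "\<And>i j. (i,j) \<in> Poly_Mapping.keys f \<Longrightarrow> a \<le> i"
  shows "ann_op_x f a \<in> Ann_inv f"
  unfolding Ann_inv_eq
proof (intro CollectI allI impI)
  fix x y assume nz: "bipoly_eval f x y \<noteq> 0"
  let ?c = "\<lambda>i j. Poly_Mapping.lookup f (i,j)"
  define gy where "gy = (\<Sum>(i,j)\<in>Poly_Mapping.keys f. ?c i j * of_nat j * x ^ (i - a) * y ^ (j - 1))"
  define xgx where "xgx = (\<Sum>(i,j)\<in>Poly_Mapping.keys f. ?c i j * of_nat (i - a) * x ^ (i - a) * y ^ j)"
  have "wact (ann_op_x f a) (inverse_fun f) x y = (\<Sum>(i,j)\<in>Poly_Mapping.keys f.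
       x * (?c i j * of_nat j * x ^ (i - a) * y ^ (j - 1)) * pdx (inverse_fun f) x y
     - ?c i j * of_nat (i - a) * x ^ (i - a) * y ^ j * pdy (inverse_fun f) x y
     + of_nat a * (?c i j * of_nat j * x ^ (i - a) * y ^ (j - 1)) * inverse_fun f x y)"
    unfolding ann_op_x_def ann_op_x_term_def wact_sum
    by (intro sum.cong refl) (auto simp: wact_add wact_single ac_simps)
  also have "\<dots> = x * gy * pdx (inverse_fun f) x y - xgx * pdy (inverse_fun f) x y
      + of_nat a * gy * inverse_fun f x y"
    unfolding gy_def xgx_def sum_distrib_left sum_distrib_right sum_subtractf[symmetric] sum.distrib[symmetric]
    by (intro sum.cong refl) (auto simp: algebra_simps)
  also have "\<dots> = x * gy * pdx (inverse_fun f) x y + (- xgx) * pdy (inverse_fun f) x y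
      + of_nat a * gy * inverse_fun f x y"
    by simp
  also have "\<dots> = 0"
  proof (rule first_order_inverse_fun_eq_0[OF nz])
    have "x * (?c i j * of_nat i * x ^ (i - 1) * y ^ j)
        = of_nat a * (?c i j * x ^ i * y ^ j) + x ^ a * (?c i j * of_nat (i - a) * x ^ (i - a) * y ^ j)"
      if "(i,j) \<in> Poly_Mapping.keys f" for i j
    proof -
      have "x * (?c i j * of_nat i * x ^ (i - 1) * y ^ j) = ?c i j * y ^ j * (x * (of_nat i * x ^ (i - 1)))"
        by (simp add: algebra_simps)
      moreover have "x ^ a * x ^ (i - a) = x ^ i" "of_nat i = (of_nat a + of_nat (i - a) :: complex)"
        using a_le[OF that] by (simp_all add: power_add[symmetric] of_nat_diff)
      ultimately show ?thesis unfolding mult_of_nat_power_pred by (simp add: algebra_simps)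
    qed
    hence "x * bipoly_dx f x y = of_nat a * bipoly_eval f x y + x ^ a * xgx"
      unfolding bipoly_dx_def bipoly_eval_def xgx_def sum_distrib_left sum.distrib[symmetric]
      by (intro sum.cong refl) auto
    moreover have "bipoly_dy f x y = x ^ a * gy"
    proof -
      have "x ^ a * x ^ (i - a) = x ^ i" if "(i,j) \<in> Poly_Mapping.keys f" for i j
        using a_le[OF that] by (simp add: power_add[symmetric])
      thus ?thesis unfolding bipoly_dy_def gy_def sum_distrib_left
        by (intro sum.cong refl) (auto simp: algebra_simps)
    qed
    ultimately show "x * gy * bipoly_dx f x y + - xgx * bipoly_dy f x y = of_nat a * gy * bipoly_eval f x y"
      by (simp add: algebra_simps)
  qed
  finally show "wact (ann_op_x f a) (inverse_fun f) x y = 0" .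
qed

definition ann_op_y_term :: "bipoly \<Rightarrow> nat \<Rightarrow> nat \<times> nat \<Rightarrow> weyl" where
  "ann_op_y_term f b = (\<lambda>(i,j).
      Poly_Mapping.single (i - 1, j - b + 1, 0, 1) (Poly_Mapping.lookup f (i,j) * of_nat i)
    + Poly_Mapping.single (i, j - b, 1, 0) (- (Poly_Mapping.lookup f (i,j) * of_nat (j - b)))
    + Poly_Mapping.single (i - 1, j - b, 0, 0) (of_nat b * (Poly_Mapping.lookup f (i,j) * of_nat i)))"

definition ann_op_y :: "bipoly \<Rightarrow> nat \<Rightarrow> weyl" where
  "ann_op_y f b = (\<Sum>k\<in>Poly_Mapping.keys f. ann_op_y_term f b k)"

lemma ann_op_y_mem_Ann_inv:
  assumes b_le: "\<And>i j. (i,j) \<in> Poly_Mapping.keys f \<Longrightarrow> b \<le> j"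
  shows "ann_op_y f b \<in> Ann_inv f"
  unfolding Ann_inv_eq
proof (intro CollectI allI impI)
  fix x y assume nz: "bipoly_eval f x y \<noteq> 0"
  let ?c = "\<lambda>i j. Poly_Mapping.lookup f (i,j)"
  define gx where "gx = (\<Sum>(i,j)\<in>Poly_Mapping.keys f. ?c i j * of_nat i * x ^ (i - 1) * y ^ (j - b))"
  define ygy where "ygy = (\<Sum>(i,j)\<in>Poly_Mapping.keys f. ?c i j * of_nat (j - b) * x ^ i * y ^ (j - b))"
  have "wact (ann_op_y f b) (inverse_fun f) x y = (\<Sum>(i,j)\<in>Poly_Mapping.keys f.
       y * (?c i j * of_nat i * x ^ (i - 1) * y ^ (j - b)) * pdy (inverse_fun f) x y
     - ?c i j * of_nat (j - b) * x ^ i * y ^ (j - b) * pdx (inverse_fun f) x y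
     + of_nat b * (?c i j * of_nat i * x ^ (i - 1) * y ^ (j - b)) * inverse_fun f x y)"
    unfolding ann_op_y_def ann_op_y_term_def wact_sum
    by (intro sum.cong refl) (auto simp: wact_add wact_single ac_simps)
  also have "\<dots> = y * gx * pdy (inverse_fun f) x y - ygy * pdx (inverse_fun f) x y
      + of_nat b * gx * inverse_fun f x y"
    unfolding gx_def ygy_def sum_distrib_left sum_distrib_right sum_subtractf[symmetric] sum.distrib[symmetric]
    by (intro sum.cong refl) (auto simp: algebra_simps)
  also have "\<dots> = (- ygy) * pdx (inverse_fun f) x y + y * gx * pdy (inverse_fun f) x y
      + of_nat b * gx * inverse_fun f x y"
    by simp
  also have "\<dots> = 0"
  proof (rule first_order_inverse_fun_eq_0[OF nz])
    have "y * (?c i j * of_nat j * x ^ i * y ^ (j - 1))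
        = of_nat b * (?c i j * x ^ i * y ^ j) + y ^ b * (?c i j * of_nat (j - b) * x ^ i * y ^ (j - b))"
      if "(i,j) \<in> Poly_Mapping.keys f" for i j
    proof -
      have "y * (?c i j * of_nat j * x ^ i * y ^ (j - 1)) = ?c i j * x ^ i * (y * (of_nat j * y ^ (j - 1)))"
        by (simp add: algebra_simps)
      moreover have "y ^ b * y ^ (j - b) = y ^ j" "of_nat j = (of_nat b + of_nat (j - b) :: complex)"
        using b_le[OF that] by (simp_all add: power_add[symmetric] of_nat_diff)
      ultimately show ?thesis unfolding mult_of_nat_power_pred by (simp add: algebra_simps)
    qed
    hence "y * bipoly_dy f x y = of_nat b * bipoly_eval f x y + y ^ b * ygy"
      unfolding bipoly_dy_def bipoly_eval_def ygy_def sum_distrib_left sum.distrib[symmetric]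
      by (intro sum.cong refl) auto
    moreover have "bipoly_dx f x y = y ^ b * gx"
    proof -
      have "y ^ b * y ^ (j - b) = y ^ j" if "(i,j) \<in> Poly_Mapping.keys f" for i j
        using b_le[OF that] by (simp add: power_add[symmetric])
      thus ?thesis unfolding bipoly_dx_def gx_def sum_distrib_left
        by (intro sum.cong refl) (auto simp: algebra_simps)
    qed
    ultimately show "- ygy * bipoly_dx f x y + y * gx * bipoly_dy f x y = of_nat b * gx * bipoly_eval f x y"
      by (simp add: algebra_simps)
  qed
  finally show "wact (ann_op_y f b) (inverse_fun f) x y = 0" .
qed

lemma dx_mem_Ann_inv:
  assumes "\<And>i j. (i,j) \<in> Poly_Mapping.keys f \<Longrightarrow> i = 0"
  shows "Poly_Mapping.single (0,0,1,0) 1 \<in> Ann_inv f"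
  unfolding Ann_inv_eq
proof (intro CollectI allI impI)
  fix x y assume "bipoly_eval f x y \<noteq> 0"
  moreover have "bipoly_dx f x y = 0" unfolding bipoly_dx_def by (rule sum.neutral) (use assms in auto)
  ultimately show "wact (Poly_Mapping.single (0,0,1,0) 1) (inverse_fun f) x y = 0"
    using first_order_inverse_fun_eq_0[of f x y 1 0 0] by (simp add: wact_single)
qed

lemma dy_mem_Ann_inv:
  assumes "\<And>i j. (i,j) \<in> Poly_Mapping.keys f \<Longrightarrow> j = 0"
  shows "Poly_Mapping.single (0,0,0,1) 1 \<in> Ann_inv f"
  unfolding Ann_inv_eq
proof (intro CollectI allI impI)
  fix x y assume "bipoly_eval f x y \<noteq> 0"
  moreover have "bipoly_dy f x y = 0" unfolding bipoly_dy_def by (rule sum.neutral) (use assms in auto)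
  ultimately show "wact (Poly_Mapping.single (0,0,0,1) 1) (inverse_fun f) x y = 0"
    using first_order_inverse_fun_eq_0[of f x y 0 1 0] by (simp add: wact_single)
qed

lemma initial_form_eqI:
  assumes P: "P = P0 + P1" and "P0 \<noteq> 0"
    and weight_P0: "\<And>m. m \<in> Poly_Mapping.keys P0 \<Longrightarrow> wweight \<omega> m = w"
    and weight_P1: "\<And>m. m \<in> Poly_Mapping.keys P1 \<Longrightarrow> wweight \<omega> m < w"
  shows "initial_form \<omega> P = P0"
proof -
  have disjoint: "m \<notin> Poly_Mapping.keys P1" if "m \<in> Poly_Mapping.keys P0" for m
    using weight_P0[OF that] weight_P1 by fastforce
  have lookup_P: "Poly_Mapping.lookup P m
      = (if m \<in> Poly_Mapping.keys P0 then Poly_Mapping.lookup P0 m else Poly_Mapping.lookup P1 m)" for m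
    using disjoint P by (auto simp: lookup_add in_keys_iff)
  have keys_P: "Poly_Mapping.keys P = Poly_Mapping.keys P0 \<union> Poly_Mapping.keys P1"
  proof (intro set_eqI)
    fix m show "m \<in> Poly_Mapping.keys P \<longleftrightarrow> m \<in> Poly_Mapping.keys P0 \<union> Poly_Mapping.keys P1"
      using disjoint[of m] lookup_P[of m] by (cases "m \<in> Poly_Mapping.keys P0") (simp_all add: in_keys_iff)
  qed
  obtain m0 where m0: "m0 \<in> Poly_Mapping.keys P0" using \<open>P0 \<noteq> 0\<close> by (metis keys_eq_empty ex_in_conv)
  have "Max (wweight \<omega> ` Poly_Mapping.keys P) = w"
  proof (rule Max_eqI)
    show "v \<le> w" if "v \<in> wweight \<omega> ` Poly_Mapping.keys P" for v
      using that keys_P weight_P0 weight_P1 by (force simp: less_imp_le)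
    show "w \<in> wweight \<omega> ` Poly_Mapping.keys P" using m0 keys_P weight_P0[OF m0] by force
  qed simp
  moreover have "{m \<in> Poly_Mapping.keys P. wweight \<omega> m = w} = Poly_Mapping.keys P0"
    using keys_P weight_P0 weight_P1 by fastforce
  moreover have "P \<noteq> 0" using keys_P m0 by auto
  ultimately have "initial_form \<omega> P
      = (\<Sum>m\<in>Poly_Mapping.keys P0. Poly_Mapping.single m (Poly_Mapping.lookup P m))"
    by (simp add: initial_form_def)
  also have "\<dots> = P0"
    by (simp add: lookup_P flip: poly_mapping_sum_single)
  finally show ?thesis .
qed

lemma initial_form_eq_self:
  assumes "\<And>m. m \<in> Poly_Mapping.keys P \<Longrightarrow> wweight \<omega> m = w"
  shows "initial_form \<omega> P = P"
  using initial_form_eqI[of P P 0 \<omega> w] assms by (cases "P = 0") (simp_all add: initial_form_def)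

lemma initial_form_sum_eqI:
  assumes "finite K" "k0 \<in> K" "T k0 \<noteq> 0"
    and "\<And>m. m \<in> Poly_Mapping.keys (T k0) \<Longrightarrow> wweight \<omega> m = w"
    and "\<And>k m. k \<in> K \<Longrightarrow> k \<noteq> k0 \<Longrightarrow> m \<in> Poly_Mapping.keys (T k) \<Longrightarrow> wweight \<omega> m < w"
  shows "initial_form \<omega> (\<Sum>k\<in>K. T k) = T k0"
proof (rule initial_form_eqI)
  show "(\<Sum>k\<in>K. T k) = T k0 + (\<Sum>k\<in>K - {k0}. T k)" using sum.remove[OF assms(1,2)] .
  show "wweight \<omega> m < w" if "m \<in> Poly_Mapping.keys (\<Sum>k\<in>K - {k0}. T k)" for m
    using subsetD[OF keys_sum that] assms(5) by blast
qed (use assms in auto)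

lemma initial_form_mem_initial_ideal: "P \<in> I \<Longrightarrow> initial_form \<omega> P \<in> initial_ideal \<omega> I"
  unfolding initial_ideal_def by (rule left_ideal_gen_base) simp

lemma in_keys_single_add3:
  assumes "m \<in> Poly_Mapping.keys (Poly_Mapping.single p u + Poly_Mapping.single q v + Poly_Mapping.single r z)"
  shows "(m = p \<and> u \<noteq> 0) \<or> (m = q \<and> v \<noteq> 0) \<or> (m = r \<and> z \<noteq> 0)"
  using assms keys_add[of "Poly_Mapping.single p u + Poly_Mapping.single q v" "Poly_Mapping.single r z"]
    keys_add[of "Poly_Mapping.single p u" "Poly_Mapping.single q v"]
  by (auto split: if_splits)

lemma wweight_ann_op_x_term:
  assumes "m \<in> Poly_Mapping.keys (ann_op_x_term f a (i,j))" "a \<le> i"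
  shows "wweight \<omega> m = - fst \<omega> * (real i - real a) - snd \<omega> * (real j - 1)"
proof -
  have "m = (i - a + 1, j - 1, 1, 0) \<and> 1 \<le> j \<or> m = (i - a, j, 0, 1) \<or> m = (i - a, j - 1, 0, 0) \<and> 1 \<le> j"
    using in_keys_single_add3[OF assms(1)[unfolded ann_op_x_term_def prod.case]] by auto
  thus ?thesis using assms(2) by (auto simp: wweight_def of_nat_diff algebra_simps)
qed

lemma wweight_ann_op_y_term:
  assumes "m \<in> Poly_Mapping.keys (ann_op_y_term f b (i,j))" "b \<le> j"
  shows "wweight \<omega> m = - fst \<omega> * (real i - 1) - snd \<omega> * (real j - real b)"
proof -
  have "m = (i - 1, j - b + 1, 0, 1) \<and> 1 \<le> i \<or> m = (i, j - b, 1, 0) \<or> m = (i - 1, j - b, 0, 0) \<and> 1 \<le> i"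
    using in_keys_single_add3[OF assms(1)[unfolded ann_op_y_term_def prod.case]] by auto
  thus ?thesis using assms(2) by (auto simp: wweight_def of_nat_diff algebra_simps)
qed

text \<open>For w1 > w2 the summand of the monomial of f of least x-degree has strictly the largest weight.\<close>

lemma initial_form_ann_op_x:
  assumes hom: "homogeneous_of_degree f d" and ab: "(a,b) \<in> Poly_Mapping.keys f"
    and a_le: "\<And>i j. (i,j) \<in> Poly_Mapping.keys f \<Longrightarrow> a \<le> i" and "1 \<le> b" and "snd \<omega> < fst \<omega>"
  shows "initial_form \<omega> (ann_op_x f a)
    = Poly_Mapping.single (1, b - 1, 1, 0) (Poly_Mapping.lookup f (a,b) * of_nat b)
      + Poly_Mapping.single (0, b - 1, 0, 0) (of_nat a * (Poly_Mapping.lookup f (a,b) * of_nat b))"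
    (is "_ = ?P0")
proof -
  have term_ab: "ann_op_x_term f a (a,b) = ?P0" by (simp add: ann_op_x_term_def)
  have "initial_form \<omega> (ann_op_x f a) = ann_op_x_term f a (a,b)"
    unfolding ann_op_x_def
  proof (rule initial_form_sum_eqI[OF finite_keys ab])
    have "Poly_Mapping.lookup (ann_op_x_term f a (a,b)) (1, b - 1, 1, 0) = Poly_Mapping.lookup f (a,b) * of_nat b"
      unfolding term_ab by (simp add: lookup_add lookup_single)
    thus "ann_op_x_term f a (a,b) \<noteq> 0" using ab \<open>1 \<le> b\<close> by (auto simp: in_keys_iff)
  next
    fix m assume "m \<in> Poly_Mapping.keys (ann_op_x_term f a (a,b))"
    thus "wweight \<omega> m = - snd \<omega> * (real b - 1)" by (simp add: wweight_ann_op_x_term)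
  next
    fix k m assume k: "k \<in> Poly_Mapping.keys f" "k \<noteq> (a,b)" and m: "m \<in> Poly_Mapping.keys (ann_op_x_term f a k)"
    obtain i j where k_eq: "k = (i,j)" by (cases k) auto
    have "i + j = a + b" using homogeneous_of_degreeD[OF hom] k ab by (simp add: k_eq)
    moreover have "a < i" using a_le[of i j] k \<open>i + j = a + b\<close> by (force simp: k_eq)
    ultimately have "wweight \<omega> m = - snd \<omega> * (real b - 1) - (fst \<omega> - snd \<omega>) * (real i - real a)"
    proof -
      have j_eq: "real j = real a + real b - real i" using \<open>i + j = a + b\<close> by linarith
      have "wweight \<omega> m = - fst \<omega> * (real i - real a) - snd \<omega> * (real a + real b - real i - 1)"
        using wweight_ann_op_x_term[of m f a i j \<omega>] m \<open>a < i\<close> by (simp add: k_eq j_eq)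
      thus ?thesis by (simp add: algebra_simps)
    qed
    thus "wweight \<omega> m < - snd \<omega> * (real b - 1)" using \<open>a < i\<close> \<open>snd \<omega> < fst \<omega>\<close> by simp
  qed
  thus ?thesis by (simp add: term_ab)
qed

lemma initial_form_ann_op_y:
  assumes hom: "homogeneous_of_degree f d" and ab: "(a,b) \<in> Poly_Mapping.keys f"
    and b_le: "\<And>i j. (i,j) \<in> Poly_Mapping.keys f \<Longrightarrow> b \<le> j" and "1 \<le> a" and "fst \<omega> < snd \<omega>"
  shows "initial_form \<omega> (ann_op_y f b)
    = Poly_Mapping.single (a - 1, 1, 0, 1) (Poly_Mapping.lookup f (a,b) * of_nat a)
      + Poly_Mapping.single (a - 1, 0, 0, 0) (of_nat b * (Poly_Mapping.lookup f (a,b) * of_nat a))"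
    (is "_ = ?Q0")
proof -
  have term_ab: "ann_op_y_term f b (a,b) = ?Q0" by (simp add: ann_op_y_term_def)
  have "initial_form \<omega> (ann_op_y f b) = ann_op_y_term f b (a,b)"
    unfolding ann_op_y_def
  proof (rule initial_form_sum_eqI[OF finite_keys ab])
    have "Poly_Mapping.lookup (ann_op_y_term f b (a,b)) (a - 1, 1, 0, 1) = Poly_Mapping.lookup f (a,b) * of_nat a"
      unfolding term_ab by (simp add: lookup_add lookup_single)
    thus "ann_op_y_term f b (a,b) \<noteq> 0" using ab \<open>1 \<le> a\<close> by (auto simp: in_keys_iff)
  next
    fix m assume "m \<in> Poly_Mapping.keys (ann_op_y_term f b (a,b))"
    thus "wweight \<omega> m = - fst \<omega> * (real a - 1)" by (simp add: wweight_ann_op_y_term)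
  next
    fix k m assume k: "k \<in> Poly_Mapping.keys f" "k \<noteq> (a,b)" and m: "m \<in> Poly_Mapping.keys (ann_op_y_term f b k)"
    obtain i j where k_eq: "k = (i,j)" by (cases k) auto
    have "i + j = a + b" using homogeneous_of_degreeD[OF hom] k ab by (simp add: k_eq)
    moreover have "b < j" using b_le[of i j] k \<open>i + j = a + b\<close> by (force simp: k_eq)
    ultimately have "wweight \<omega> m = - fst \<omega> * (real a - 1) - (snd \<omega> - fst \<omega>) * (real j - real b)"
    proof -
      have i_eq: "real i = real a + real b - real j" using \<open>i + j = a + b\<close> by linarith
      have "wweight \<omega> m = - fst \<omega> * (real a + real b - real j - 1) - snd \<omega> * (real j - real b)"
        using wweight_ann_op_y_term[of m f b i j \<omega>] m \<open>b < j\<close> by (simp add: k_eq i_eq)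
      thus ?thesis by (simp add: algebra_simps)
    qed
    thus "wweight \<omega> m < - fst \<omega> * (real a - 1)" using \<open>b < j\<close> \<open>fst \<omega> < snd \<omega>\<close> by simp
  qed
  thus ?thesis by (simp add: term_ab)
qed

section \<open>Eigenvalue functions modulo the Euler operator\<close>

definition eigenfun :: "(nat \<Rightarrow> nat \<Rightarrow> complex) \<Rightarrow> bool" where
  "eigenfun h \<longleftrightarrow> (\<exists>P. diagonal P h)"

lemma eigenfun_const: "eigenfun (\<lambda>i j. z)"
  using diagonal_wconst eigenfun_def by blast

lemma eigenfun_i: "eigenfun (\<lambda>i j. of_nat i)"
  using diagonal_theta_x[of 1] eigenfun_def by auto

lemma eigenfun_j: "eigenfun (\<lambda>i j. of_nat j)"
  using diagonal_theta_y[of 1] eigenfun_def by auto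

lemma eigenfun_add: "eigenfun h \<Longrightarrow> eigenfun k \<Longrightarrow> eigenfun (\<lambda>i j. h i j + k i j)"
  unfolding eigenfun_def using diagonal_add by blast

lemma eigenfun_mult: "eigenfun h \<Longrightarrow> eigenfun k \<Longrightarrow> eigenfun (\<lambda>i j. h i j * k i j)"
  unfolding eigenfun_def using diagonal_wmul by blast

lemma eigenfun_uminus: "eigenfun h \<Longrightarrow> eigenfun (\<lambda>i j. - h i j)"
  using eigenfun_mult[OF eigenfun_const[of "-1"]] by simp

lemma eigenfun_prod: "(\<And>t. t \<in> T \<Longrightarrow> eigenfun (h t)) \<Longrightarrow> eigenfun (\<lambda>i j. \<Prod>t\<in>T. h t i j)"
  by (induction T rule: infinite_finite_induct) (simp_all add: eigenfun_const eigenfun_mult)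

lemma eigenfun_shifted_prod: "eigenfun (\<lambda>i j. \<Prod>s\<in>S. of_nat i + of_nat s)"
  by (intro eigenfun_prod eigenfun_add eigenfun_i eigenfun_const)

text \<open>Diagonal operators whose eigenvalue functions are congruent modulo i + j + d, with an
  eigenvalue function as quotient, differ by a left multiple of the Euler operator.\<close>

definition euler_cong :: "nat \<Rightarrow> (nat \<Rightarrow> nat \<Rightarrow> complex) \<Rightarrow> (nat \<Rightarrow> nat \<Rightarrow> complex) \<Rightarrow> bool" where
  "euler_cong d h k \<longleftrightarrow>
     (\<exists>q. eigenfun q \<and> (\<forall>i j. h i j = k i j + q i j * (of_nat i + of_nat j + of_nat d)))"

lemma euler_cong_refl: "euler_cong d h h"
  unfolding euler_cong_def using eigenfun_const[of 0] by auto

lemma euler_cong_sym: "euler_cong d h k \<Longrightarrow> euler_cong d k h"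
proof -
  assume "euler_cong d h k"
  then obtain q where "eigenfun q" "\<And>i j. h i j = k i j + q i j * (of_nat i + of_nat j + of_nat d)"
    by (auto simp: euler_cong_def)
  thus ?thesis unfolding euler_cong_def
    by (intro exI[of _ "\<lambda>i j. - q i j"] conjI eigenfun_uminus) (simp_all add: algebra_simps)
qed

lemma euler_cong_trans: "euler_cong d h k \<Longrightarrow> euler_cong d k l \<Longrightarrow> euler_cong d h l"
proof -
  assume "euler_cong d h k" "euler_cong d k l"
  then obtain q r where "eigenfun q" "\<And>i j. h i j = k i j + q i j * (of_nat i + of_nat j + of_nat d)"
    and "eigenfun r" "\<And>i j. k i j = l i j + r i j * (of_nat i + of_nat j + of_nat d)"
    unfolding euler_cong_def by blast
  thus ?thesis unfolding euler_cong_def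
    by (intro exI[of _ "\<lambda>i j. q i j + r i j"] conjI eigenfun_add) (simp_all add: algebra_simps)
qed

lemma euler_cong_mult:
  assumes "euler_cong d h h'" "euler_cong d k k'" "eigenfun h'" "eigenfun k"
  shows "euler_cong d (\<lambda>i j. h i j * k i j) (\<lambda>i j. h' i j * k' i j)"
proof -
  let ?e = "\<lambda>i j. of_nat i + of_nat j + of_nat d :: complex"
  obtain q where q: "eigenfun q" "\<And>i j. h i j = h' i j + q i j * ?e i j"
    using assms(1) by (auto simp: euler_cong_def)
  obtain r where r: "eigenfun r" "\<And>i j. k i j = k' i j + r i j * ?e i j"
    using assms(2) by (auto simp: euler_cong_def)
  have "eigenfun (\<lambda>i j. q i j * k i j + h' i j * r i j)"
    by (intro eigenfun_add eigenfun_mult q r assms)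
  moreover have "h i j * k i j = h' i j * k' i j + (q i j * k i j + h' i j * r i j) * ?e i j" for i j
  proof -
    have "h i j * k i j = h' i j * k i j + q i j * k i j * ?e i j" by (subst q(2)) (simp add: algebra_simps)
    also have "h' i j * k i j = h' i j * k' i j + h' i j * r i j * ?e i j" by (subst r(2)) (simp add: algebra_simps)
    finally show ?thesis by (simp add: algebra_simps)
  qed
  ultimately show ?thesis unfolding euler_cong_def by blast
qed

lemma euler_cong_prod:
  assumes "\<And>t. t \<in> T \<Longrightarrow> euler_cong d (h t) (k t)"
    and "\<And>t. t \<in> T \<Longrightarrow> eigenfun (h t)" "\<And>t. t \<in> T \<Longrightarrow> eigenfun (k t)"
  shows "euler_cong d (\<lambda>i j. \<Prod>t\<in>T. h t i j) (\<lambda>i j. \<Prod>t\<in>T. k t i j)"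
  using assms
proof (induction T rule: infinite_finite_induct)
  case (insert t T)
  have "euler_cong d (\<lambda>i j. h t i j * (\<Prod>t\<in>T. h t i j)) (\<lambda>i j. k t i j * (\<Prod>t\<in>T. k t i j))"
    using insert by (intro euler_cong_mult eigenfun_prod) auto
  thus ?case using insert.hyps by simp
qed (simp_all add: euler_cong_refl)

lemma euler_cong_linear:
  "euler_cong d (\<lambda>i j. \<alpha> * of_nat i + \<beta> * of_nat j + \<gamma>) (\<lambda>i j. (\<alpha> - \<beta>) * of_nat i + (\<gamma> - \<beta> * of_nat d))"
  unfolding euler_cong_def by (auto intro!: exI[of _ "\<lambda>i j. \<beta>"] eigenfun_const simp: algebra_simps)

lemma diagonal_mem_left_ideal_gen:
  assumes E: "E \<in> left_ideal_gen S" "diagonal E (\<lambda>i j. of_nat i + of_nat j + of_nat d)"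
    and Z: "Z \<in> left_ideal_gen S" "diagonal Z z"
    and X: "diagonal X x" "euler_cong d x (\<lambda>i j. w i j * z i j)" "eigenfun w"
  shows "X \<in> left_ideal_gen S"
proof -
  obtain q where q: "eigenfun q" "\<And>i j. x i j = w i j * z i j + q i j * (of_nat i + of_nat j + of_nat d)"
    using X(2) by (auto simp: euler_cong_def)
  obtain W Q where "diagonal W w" "diagonal Q q" using X(3) q(1) by (auto simp: eigenfun_def)
  hence "diagonal (wmul W Z + wmul Q E) (\<lambda>i j. w i j * z i j + q i j * (of_nat i + of_nat j + of_nat d))"
    using Z(2) E(2) by (intro diagonal_add diagonal_wmul)
  hence "diagonal (wmul W Z + wmul Q E) x"
    by (rule diagonal_cong) (simp add: q(2))
  hence "X = wmul W Z + wmul Q E" using X(1) diagonal_unique by blast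
  thus ?thesis using left_ideal_gen_add left_ideal_gen_wmul E(1) Z(1) by simp
qed

lemma diagonal_dy_pow_wmul:
  "diagonal (wmul (Poly_Mapping.single (0,0,0,n) 1) (Poly_Mapping.single (1,n,1,0) u + Poly_Mapping.single (0,n,0,0) v))
     (\<lambda>i j. (u * of_nat i + v) * (\<Prod>t\<in>{1..n}. of_nat j + of_nat t))"
proof -
  have "poly_act (Poly_Mapping.single (1,n,1,0) u + Poly_Mapping.single (0,n,0,0) v) (Poly_Mapping.single (i,j) w)
      = Poly_Mapping.single (i, j + n) (w * (u * of_nat i + v))" for i j w
    by (cases i) (simp_all add: poly_act_add_left poly_act_single_single ffac_eq_falling_fact
        falling_fact_def algebra_simps flip: single_add)
  moreover have "poly_act (Poly_Mapping.single (0,0,0,n) 1) (Poly_Mapping.single (i, j + n) w)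
      = Poly_Mapping.single (i, j) (w * (\<Prod>t\<in>{1..n}. of_nat j + of_nat t))" for i j w
    by (simp add: poly_act_single_single ffac_eq_falling_fact falling_fact_eq_prod)
  ultimately show ?thesis by (simp add: diagonal_def poly_act_wmul ac_simps)
qed

lemma diagonal_dx_pow_wmul:
  "diagonal (wmul (Poly_Mapping.single (0,0,n,0) 1) (Poly_Mapping.single (n,1,0,1) u + Poly_Mapping.single (n,0,0,0) v))
     (\<lambda>i j. (u * of_nat j + v) * (\<Prod>t\<in>{1..n}. of_nat i + of_nat t))"
proof -
  have "poly_act (Poly_Mapping.single (n,1,0,1) u + Poly_Mapping.single (n,0,0,0) v) (Poly_Mapping.single (i,j) w)
      = Poly_Mapping.single (i + n, j) (w * (u * of_nat j + v))" for i j w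
    by (cases j) (simp_all add: poly_act_add_left poly_act_single_single ffac_eq_falling_fact
        falling_fact_def algebra_simps flip: single_add)
  moreover have "poly_act (Poly_Mapping.single (0,0,n,0) 1) (Poly_Mapping.single (i + n, j) w)
      = Poly_Mapping.single (i, j) (w * (\<Prod>t\<in>{1..n}. of_nat i + of_nat t))" for i j w
    by (simp add: poly_act_single_single ffac_eq_falling_fact falling_fact_eq_prod)
  ultimately show ?thesis by (simp add: diagonal_def poly_act_wmul ac_simps)
qed

section \<open>The initial ideal of \<open>Ann(1/f)\<close>\<close>

lemma euler_op_mem_initial_ideal:
  assumes "homogeneous_of_degree f d"
  shows "euler_op d \<in> initial_ideal \<omega> (Ann_inv f)"
proof -
  have "initial_form \<omega> (euler_op d) = euler_op d"
  proof (rule initial_form_eq_self)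
    fix m assume "m \<in> Poly_Mapping.keys (euler_op d)"
    hence "m = (1,0,1,0) \<or> m = (0,1,0,1) \<or> m = (0,0,0,0)"
      unfolding euler_op_def wconst_def by (blast dest: in_keys_single_add3)
    thus "wweight \<omega> m = 0" by (auto simp: wweight_def)
  qed
  thus ?thesis using initial_form_mem_initial_ideal[OF euler_op_mem_Ann_inv[OF assms], of \<omega>] by simp
qed

lemma initial_ideal_wmul: "P \<in> initial_ideal \<omega> I \<Longrightarrow> wmul W P \<in> initial_ideal \<omega> I"
  unfolding initial_ideal_def by (rule left_ideal_gen_wmul)

definition has_shifted_prod :: "weyl set \<Rightarrow> nat \<Rightarrow> bool" where
  "has_shifted_prod L d \<longleftrightarrow> (\<exists>Z z \<kappa> S. Z \<in> L \<and> diagonal Z z \<and> \<kappa> \<noteq> 0 \<and> S \<subseteq> {0..d} \<and>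
      euler_cong d z (\<lambda>i j. \<kappa> * (\<Prod>s\<in>S. of_nat i + of_nat s)))"

definition bfun_root :: "real \<times> real \<Rightarrow> nat \<Rightarrow> nat \<Rightarrow> complex" where
  "bfun_root \<omega> d t = complex_of_real (real t * fst \<omega> + real (d - t) * snd \<omega>)"

text \<open>Modulo the Euler operator, the product of the s + bfun_root w d t acts on x^i y^j by
  (w1 - w2)^(d+1) i (i+1) ... (i+d), a multiple of kappa * prod (i + s) over any S \<subseteq> {0..d}.\<close>

lemma mem_initial_ideal_if_has_shifted_prod:
  assumes hom: "homogeneous_of_degree f d"
    and shifted: "has_shifted_prod (initial_ideal \<omega> (Ann_inv f)) d"
    and X: "diagonal X (\<lambda>i j. \<Prod>t\<in>{0..d}.
              of_real (fst \<omega>) * of_nat i + of_real (snd \<omega>) * of_nat j + bfun_root \<omega> d t)"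
  shows "X \<in> initial_ideal \<omega> (Ann_inv f)"
proof -
  obtain Z z \<kappa> S where Z: "Z \<in> initial_ideal \<omega> (Ann_inv f)" "diagonal Z z"
    and "\<kappa> \<noteq> 0" "S \<subseteq> {0..d}" and z: "euler_cong d z (\<lambda>i j. \<kappa> * (\<Prod>s\<in>S. of_nat i + of_nat s))"
    using shifted by (auto simp: has_shifted_prod_def)
  define \<delta> :: complex where "\<delta> = of_real (fst \<omega>) - of_real (snd \<omega>)"
  define w where "w i j = \<delta> ^ (d + 1) / \<kappa> * (\<Prod>s\<in>{0..d} - S. of_nat i + of_nat s)" for i j :: nat
  have "eigenfun w" unfolding w_def by (intro eigenfun_mult eigenfun_const eigenfun_shifted_prod)
  let ?x = "\<lambda>i j. \<Prod>t\<in>{0..d}. of_real (fst \<omega>) * of_nat i + of_real (snd \<omega>) * of_nat j + bfun_root \<omega> d t"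
  have "euler_cong d (\<lambda>i j. of_real (fst \<omega>) * of_nat i + of_real (snd \<omega>) * of_nat j + bfun_root \<omega> d t)
      (\<lambda>i j. \<delta> * (of_nat i + of_nat t))" if "t \<in> {0..d}" for t
    using euler_cong_linear[of d "of_real (fst \<omega>)" "of_real (snd \<omega>)" "bfun_root \<omega> d t"] that
    by (simp add: bfun_root_def \<delta>_def of_nat_diff algebra_simps)
  hence x_cong: "euler_cong d ?x (\<lambda>i j. \<Prod>t\<in>{0..d}. \<delta> * (of_nat i + of_nat t))"
    by (intro euler_cong_prod) (auto intro!: eigenfun_add eigenfun_mult eigenfun_const eigenfun_i eigenfun_j)
  have split: "(\<lambda>i j. \<Prod>t\<in>{0..d}. \<delta> * (of_nat i + of_nat t))
      = (\<lambda>i j. w i j * (\<kappa> * (\<Prod>s\<in>S. of_nat i + of_nat s)))"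
  proof -
    have "(\<Prod>t\<in>{0..d}. of_nat i + of_nat t :: complex)
        = (\<Prod>s\<in>{0..d} - S. of_nat i + of_nat s) * (\<Prod>s\<in>S. of_nat i + of_nat s)" for i
      by (rule prod.subset_diff[OF \<open>S \<subseteq> {0..d}\<close>]) simp
    thus ?thesis using \<open>\<kappa> \<noteq> 0\<close> by (simp add: w_def prod.distrib fun_eq_iff)
  qed
  have "euler_cong d (\<lambda>i j. w i j * (\<kappa> * (\<Prod>s\<in>S. of_nat i + of_nat s))) (\<lambda>i j. w i j * z i j)"
    using \<open>eigenfun w\<close> by (intro euler_cong_mult euler_cong_refl euler_cong_sym[OF z]
        eigenfun_mult eigenfun_const eigenfun_shifted_prod)
  with x_cong have x_w: "euler_cong d ?x (\<lambda>i j. w i j * z i j)" unfolding split by (rule euler_cong_trans)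
  show ?thesis unfolding initial_ideal_def
    by (rule diagonal_mem_left_ideal_gen[OF _ diagonal_euler_op _ Z(2) X x_w \<open>eigenfun w\<close>])
       (use euler_op_mem_initial_ideal[OF hom] Z(1) in \<open>simp_all add: initial_ideal_def\<close>)
qed

lemma euler_cong_j_add: "t \<le> d \<Longrightarrow> euler_cong d (\<lambda>i j. of_nat j + of_nat t) (\<lambda>i j. - (of_nat i + of_nat (d - t)))"
  using euler_cong_linear[of d 0 1 "of_nat t"] by (simp add: of_nat_diff algebra_simps)

lemma has_shifted_prodI:
  "Z \<in> L \<Longrightarrow> diagonal Z z \<Longrightarrow> \<kappa> \<noteq> 0 \<Longrightarrow> S \<subseteq> {0..d} \<Longrightarrow>
    euler_cong d z (\<lambda>i j. \<kappa> * (\<Prod>s\<in>S. of_nat i + of_nat s)) \<Longrightarrow> has_shifted_prod L d"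
  unfolding has_shifted_prod_def by blast

lemma has_shifted_prod_ann_op_x:
  assumes hom: "homogeneous_of_degree f d" and ab: "(a,b) \<in> Poly_Mapping.keys f"
    and a_le: "\<And>i j. (i,j) \<in> Poly_Mapping.keys f \<Longrightarrow> a \<le> i" and "1 \<le> b" and "snd \<omega> < fst \<omega>"
  shows "has_shifted_prod (initial_ideal \<omega> (Ann_inv f)) d"
proof -
  define n where "n = b - 1"
  define u where "u = Poly_Mapping.lookup f (a,b) * of_nat b"
  have "u \<noteq> 0" using ab \<open>1 \<le> b\<close> by (simp add: u_def in_keys_iff)
  have d_eq: "d = a + n + 1" using homogeneous_of_degreeD[OF hom ab] \<open>1 \<le> b\<close> by (simp add: n_def)
  define Z where "Z = wmul (Poly_Mapping.single (0,0,0,n) 1)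
    (Poly_Mapping.single (1,n,1,0) u + Poly_Mapping.single (0,n,0,0) (of_nat a * u))"
  have Z_mem: "Z \<in> initial_ideal \<omega> (Ann_inv f)"
  proof -
    have "initial_form \<omega> (ann_op_x f a) \<in> initial_ideal \<omega> (Ann_inv f)"
      by (intro initial_form_mem_initial_ideal ann_op_x_mem_Ann_inv a_le)
    moreover have "initial_form \<omega> (ann_op_x f a) = Poly_Mapping.single (1,n,1,0) u + Poly_Mapping.single (0,n,0,0) (of_nat a * u)"
      unfolding u_def n_def by (rule initial_form_ann_op_x[OF hom ab _ \<open>1 \<le> b\<close> \<open>snd \<omega> < fst \<omega>\<close>]) (rule a_le)
    ultimately show ?thesis unfolding Z_def by (intro initial_ideal_wmul) simp
  qed
  have Z_diag: "diagonal Z (\<lambda>i j. (u * of_nat i + of_nat a * u) * (\<Prod>t\<in>{1..n}. of_nat j + of_nat t))"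
    unfolding Z_def by (rule diagonal_dy_pow_wmul)
  have cong: "euler_cong d (\<lambda>i j. (u * of_nat i + of_nat a * u) * (\<Prod>t\<in>{1..n}. of_nat j + of_nat t))
      (\<lambda>i j. (u * of_nat i + of_nat a * u) * (\<Prod>t\<in>{1..n}. - (of_nat i + of_nat (d - t))))"
    by (intro euler_cong_mult euler_cong_refl euler_cong_prod euler_cong_j_add eigenfun_prod eigenfun_uminus
        eigenfun_add eigenfun_mult eigenfun_i eigenfun_j eigenfun_const) (auto simp: d_eq)
  have prod_eq: "(u * of_nat i + of_nat a * u) * (\<Prod>t\<in>{1..n}. - (of_nat i + of_nat (d - t)))
      = u * (-1) ^ n * (\<Prod>s\<in>insert a ((\<lambda>t. d - t) ` {1..n}). of_nat i + of_nat s)" for i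
  proof -
    have "inj_on (\<lambda>t. d - t) {1..n}" using d_eq by (intro inj_onI) auto
    moreover have "a \<notin> (\<lambda>t. d - t) ` {1..n}" using d_eq by auto
    ultimately have "(\<Prod>s\<in>insert a ((\<lambda>t. d - t) ` {1..n}). of_nat i + of_nat s)
        = (of_nat i + of_nat a) * (\<Prod>t\<in>{1..n}. of_nat i + of_nat (d - t) :: complex)"
      by (simp add: prod.reindex)
    moreover have "(\<Prod>t\<in>{1..n}. - (of_nat i + of_nat (d - t))) = (-1) ^ n * (\<Prod>t\<in>{1..n}. of_nat i + of_nat (d - t) :: complex)"
      by (subst prod_uminus) simp
    ultimately show ?thesis by (simp add: algebra_simps)
  qed
  have "insert a ((\<lambda>t. d - t) ` {1..n}) \<subseteq> {0..d}" using d_eq by auto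
  moreover have "u * (-1) ^ n \<noteq> 0" using \<open>u \<noteq> 0\<close> by simp
  ultimately show ?thesis using cong unfolding prod_eq
    by (intro has_shifted_prodI[OF Z_mem Z_diag]) simp_all
qed

lemma has_shifted_prod_ann_op_y:
  assumes hom: "homogeneous_of_degree f d" and ab: "(a,b) \<in> Poly_Mapping.keys f"
    and b_le: "\<And>i j. (i,j) \<in> Poly_Mapping.keys f \<Longrightarrow> b \<le> j" and "1 \<le> a" and "fst \<omega> < snd \<omega>"
  shows "has_shifted_prod (initial_ideal \<omega> (Ann_inv f)) d"
proof -
  define n where "n = a - 1"
  define u where "u = Poly_Mapping.lookup f (a,b) * of_nat a"
  have "u \<noteq> 0" using ab \<open>1 \<le> a\<close> by (simp add: u_def in_keys_iff)
  have d_eq: "d = a + b" "a = n + 1" using homogeneous_of_degreeD[OF hom ab] \<open>1 \<le> a\<close> by (simp_all add: n_def)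
  define Z where "Z = wmul (Poly_Mapping.single (0,0,n,0) 1)
    (Poly_Mapping.single (n,1,0,1) u + Poly_Mapping.single (n,0,0,0) (of_nat b * u))"
  have Z_mem: "Z \<in> initial_ideal \<omega> (Ann_inv f)"
  proof -
    have "initial_form \<omega> (ann_op_y f b) \<in> initial_ideal \<omega> (Ann_inv f)"
      by (intro initial_form_mem_initial_ideal ann_op_y_mem_Ann_inv b_le)
    moreover have "initial_form \<omega> (ann_op_y f b) = Poly_Mapping.single (n,1,0,1) u + Poly_Mapping.single (n,0,0,0) (of_nat b * u)"
      unfolding u_def n_def by (rule initial_form_ann_op_y[OF hom ab _ \<open>1 \<le> a\<close> \<open>fst \<omega> < snd \<omega>\<close>]) (rule b_le)
    ultimately show ?thesis unfolding Z_def by (intro initial_ideal_wmul) simp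
  qed
  have Z_diag: "diagonal Z (\<lambda>i j. (u * of_nat j + of_nat b * u) * (\<Prod>t\<in>{1..n}. of_nat i + of_nat t))"
    unfolding Z_def by (rule diagonal_dx_pow_wmul)
  have cong: "euler_cong d (\<lambda>i j. (u * of_nat j + of_nat b * u) * (\<Prod>t\<in>{1..n}. of_nat i + of_nat t))
      (\<lambda>i j. (- u * (of_nat i + of_nat a)) * (\<Prod>t\<in>{1..n}. of_nat i + of_nat t))"
  proof (intro euler_cong_mult euler_cong_refl eigenfun_mult eigenfun_add eigenfun_const eigenfun_i eigenfun_shifted_prod)
    show "euler_cong d (\<lambda>i j. u * of_nat j + of_nat b * u) (\<lambda>i j. - u * (of_nat i + of_nat a))"
      using euler_cong_linear[of d 0 u "of_nat b * u"] d_eq by (simp add: algebra_simps)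
  qed
  have prod_eq: "(- u * (of_nat i + of_nat a)) * (\<Prod>t\<in>{1..n}. of_nat i + of_nat t)
      = - u * (\<Prod>s\<in>insert a {1..n}. of_nat i + of_nat s)" for i
    using d_eq by simp
  have "insert a {1..n} \<subseteq> {0..d}" using d_eq by auto
  moreover have "- u \<noteq> 0" using \<open>u \<noteq> 0\<close> by simp
  ultimately show ?thesis using cong unfolding prod_eq
    by (intro has_shifted_prodI[OF Z_mem Z_diag, where \<kappa> = "- u"]) simp_all
qed

lemma has_shifted_prod_x_power:
  assumes "\<And>i j. (i,j) \<in> Poly_Mapping.keys f \<Longrightarrow> j = 0"
  shows "has_shifted_prod (initial_ideal \<omega> (Ann_inv f)) d"
proof (rule has_shifted_prodI)
  have "initial_form \<omega> (Poly_Mapping.single (0,0,0,1) 1) = Poly_Mapping.single (0,0,0,1) 1"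
    by (rule initial_form_eq_self) simp
  moreover have "initial_form \<omega> (Poly_Mapping.single (0,0,0,1) 1) \<in> initial_ideal \<omega> (Ann_inv f)"
    by (intro initial_form_mem_initial_ideal dy_mem_Ann_inv assms)
  ultimately have "Poly_Mapping.single (0,0,0,1) 1 \<in> initial_ideal \<omega> (Ann_inv f)" by simp
  from initial_ideal_wmul[OF this, of "Poly_Mapping.single (0,1,0,0) 1"]
  show "Poly_Mapping.single (0,1,0,1) 1 \<in> initial_ideal \<omega> (Ann_inv f)"
    by (simp add: wmul_single_single ffac_def)
  show "diagonal (Poly_Mapping.single (0,1,0,1) 1) (\<lambda>i j. 1 * of_nat j)" by (rule diagonal_theta_y)
  show "euler_cong d (\<lambda>i j. 1 * of_nat j) (\<lambda>i j. - 1 * (\<Prod>s\<in>{d}. of_nat i + of_nat s))"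
    using euler_cong_j_add[of 0 d] by simp
qed auto

lemma has_shifted_prod_y_power:
  assumes "\<And>i j. (i,j) \<in> Poly_Mapping.keys f \<Longrightarrow> i = 0"
  shows "has_shifted_prod (initial_ideal \<omega> (Ann_inv f)) d"
proof (rule has_shifted_prodI)
  have "initial_form \<omega> (Poly_Mapping.single (0,0,1,0) 1) = Poly_Mapping.single (0,0,1,0) 1"
    by (rule initial_form_eq_self) simp
  moreover have "initial_form \<omega> (Poly_Mapping.single (0,0,1,0) 1) \<in> initial_ideal \<omega> (Ann_inv f)"
    by (intro initial_form_mem_initial_ideal dx_mem_Ann_inv assms)
  ultimately have "Poly_Mapping.single (0,0,1,0) 1 \<in> initial_ideal \<omega> (Ann_inv f)" by simp
  from initial_ideal_wmul[OF this, of "Poly_Mapping.single (1,0,0,0) 1"]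
  show "Poly_Mapping.single (1,0,1,0) 1 \<in> initial_ideal \<omega> (Ann_inv f)"
    by (simp add: wmul_single_single ffac_def)
  show "diagonal (Poly_Mapping.single (1,0,1,0) 1) (\<lambda>i j. 1 * of_nat i)" by (rule diagonal_theta_x)
  show "euler_cong d (\<lambda>i j. 1 * of_nat i) (\<lambda>i j. 1 * (\<Prod>s\<in>{0}. of_nat i + of_nat s))"
    using euler_cong_refl by simp
qed auto

lemma has_shifted_prod_initial_ideal:
  assumes "f \<noteq> 0" and hom: "homogeneous_of_degree f d" and "fst \<omega> \<noteq> snd \<omega>"
  shows "has_shifted_prod (initial_ideal \<omega> (Ann_inv f)) d"
proof (cases "snd \<omega> < fst \<omega>")
  case True
  define a where "a = Min (fst ` Poly_Mapping.keys f)"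
  have "a \<in> fst ` Poly_Mapping.keys f" unfolding a_def using \<open>f \<noteq> 0\<close> by (intro Min_in) auto
  then obtain b where ab: "(a,b) \<in> Poly_Mapping.keys f" by force
  have a_le: "a \<le> i" if "(i,j) \<in> Poly_Mapping.keys f" for i j
    unfolding a_def using that by (intro Min_le) force+
  show ?thesis
  proof (cases "b = 0")
    case True
    have "j = 0" if "(i,j) \<in> Poly_Mapping.keys f" for i j
      using a_le[OF that] homogeneous_of_degreeD[OF hom that] homogeneous_of_degreeD[OF hom ab] True by simp
    thus ?thesis by (rule has_shifted_prod_x_power)
  next
    case False
    show ?thesis by (rule has_shifted_prod_ann_op_x[OF hom ab _ _ \<open>snd \<omega> < fst \<omega>\<close>]) (use a_le False in auto)
  qed
next
  case False
  hence "fst \<omega> < snd \<omega>" using \<open>fst \<omega> \<noteq> snd \<omega>\<close> by simp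
  define b where "b = Min (snd ` Poly_Mapping.keys f)"
  have "b \<in> snd ` Poly_Mapping.keys f" unfolding b_def using \<open>f \<noteq> 0\<close> by (intro Min_in) auto
  then obtain a where ab: "(a,b) \<in> Poly_Mapping.keys f" by force
  have b_le: "b \<le> j" if "(i,j) \<in> Poly_Mapping.keys f" for i j
    unfolding b_def using that by (intro Min_le) force+
  show ?thesis
  proof (cases "a = 0")
    case True
    have "i = 0" if "(i,j) \<in> Poly_Mapping.keys f" for i j
      using b_le[OF that] homogeneous_of_degreeD[OF hom that] homogeneous_of_degreeD[OF hom ab] True by simp
    thus ?thesis by (rule has_shifted_prod_y_power)
  next
    case False
    show ?thesis by (rule has_shifted_prod_ann_op_y[OF hom ab _ _ \<open>fst \<omega> < snd \<omega>\<close>]) (use b_le False in auto)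
  qed
qed

lemma root_poly_mem_initial_ideal:
  assumes "f \<noteq> 0" and hom: "homogeneous_of_degree f d"
  shows "poly_in_s \<omega> (\<Prod>c\<in>bfun_root \<omega> d ` {0..d}. [:c, 1:]) \<in> initial_ideal \<omega> (Ann_inv f)"
proof -
  let ?R = "\<Prod>c\<in>bfun_root \<omega> d ` {0..d}. [:c, 1:]"
  have diag_R: "diagonal (poly_in_s \<omega> ?R)
      (\<lambda>i j. \<Prod>c\<in>bfun_root \<omega> d ` {0..d}. of_real (fst \<omega>) * of_nat i + of_real (snd \<omega>) * of_nat j + c)"
    by (rule diagonal_cong[OF diagonal_poly_in_s]) (simp add: poly_prod algebra_simps)
  show ?thesis
  proof (cases "fst \<omega> = snd \<omega>")
    case True
    hence "bfun_root \<omega> d t = of_real (fst \<omega>) * of_nat d" if "t \<in> {0..d}" for t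
      using that by (simp add: bfun_root_def of_nat_diff algebra_simps)
    hence "bfun_root \<omega> d ` {0..d} = {of_real (fst \<omega>) * of_nat d}" by force
    hence "diagonal (poly_in_s \<omega> ?R) (\<lambda>i j. of_real (fst \<omega>) * (of_nat i + of_nat j + of_nat d))"
      using diag_R True by (simp add: algebra_simps)
    moreover have "diagonal (wmul (wconst (of_real (fst \<omega>))) (euler_op d))
        (\<lambda>i j. of_real (fst \<omega>) * (of_nat i + of_nat j + of_nat d))"
      by (rule diagonal_wmul[OF diagonal_wconst diagonal_euler_op])
    ultimately have "poly_in_s \<omega> ?R = wmul (wconst (of_real (fst \<omega>))) (euler_op d)"
      by (rule diagonal_unique)
    thus ?thesis by (simp add: initial_ideal_wmul euler_op_mem_initial_ideal[OF hom])
  next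
    case False
    have "inj_on (bfun_root \<omega> d) {0..d}"
    proof (rule inj_onI)
      fix s t assume "s \<in> {0..d}" "t \<in> {0..d}" "bfun_root \<omega> d s = bfun_root \<omega> d t"
      hence "real s * fst \<omega> + real (d - s) * snd \<omega> = real t * fst \<omega> + real (d - t) * snd \<omega>"
        by (simp only: bfun_root_def of_real_eq_iff)
      hence "(real s - real t) * (fst \<omega> - snd \<omega>) = 0"
        using \<open>s \<in> {0..d}\<close> \<open>t \<in> {0..d}\<close> by (simp add: of_nat_diff algebra_simps)
      thus "s = t" using False by simp
    qed
    hence "diagonal (poly_in_s \<omega> ?R)
        (\<lambda>i j. \<Prod>t\<in>{0..d}. of_real (fst \<omega>) * of_nat i + of_real (snd \<omega>) * of_nat j + bfun_root \<omega> d t)"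
      using diag_R by (simp add: prod.reindex)
    thus ?thesis
      by (rule mem_initial_ideal_if_has_shifted_prod[OF hom has_shifted_prod_initial_ideal[OF assms False]])
  qed
qed

theorem mainTheorem14:
  fixes f :: bipoly and d :: nat and \<omega> :: "real \<times> real"
  assumes "f \<noteq> 0" and "homogeneous_of_degree f d" and "\<omega> \<noteq> (0, 0)"
  shows "b_function (Ann_inv f) \<omega> dvd
    (\<Prod>c\<in>(\<lambda>i. complex_of_real (real i * fst \<omega> + real (d - i) * snd \<omega>)) ` {0..d}. [:c, 1:])"
proof -
  have "(\<lambda>i. complex_of_real (real i * fst \<omega> + real (d - i) * snd \<omega>)) = bfun_root \<omega> d"
    by (simp add: fun_eq_iff bfun_root_def)
  thus ?thesis
    by (simp only:) (rule b_function_dvd[OF root_poly_mem_initial_ideal[OF assms(1,2)]], simp add: prod_zero_iff)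
qed

end
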